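(* Let $N, N', \nu, \nu'$ be integers with $N > N' > 0$ and $m := N\nu' - N'\nu > 0$. For parameters $s \ge 0$, $s' \ge 0$, $x_0 \in \mathbb{R}$, $t_0 \in \mathbb{R}$ define $$A = \sqrt{\tfrac{N-N'+s+s'}{N+s+s'}}\sqrt{\tfrac{(N+s')s'}{N'(N-N')+(N+s')s'}},\quad B = \sqrt{\tfrac{(N+s')s'}{N'(N-N')+(N+s')s'}}\sqrt{\tfrac{s}{N-N'+s}},\quad C = \sqrt{\tfrac{s}{N-N'+s}}\sqrt{\tfrac{N-N'+s+s'}{N+s+s'}},$$ $$\alpha_0 = \frac{N^2\nu' - (N')^2\nu}{m} - 2s - \frac{2N'(\nu'-\nu)}{m}s', \qquad \omega = \frac{2\pi}{T} = \frac{N'(N-N')(N+2s')}{m},$$ and the polynomial $P(z,\lambda) = z^N + A\lambda^{\nu'}z^{N-N'} + B\lambda^{\nu-\nu'}z^{N'} + C\lambda^{\nu}$. Then for every $\lambda$ with $|\lambda|=1$ all $N$ roots of $P(\cdot,\lambda)$ lie in the open unit disk, and, letting $\beta_1(t),\dots,\beta_N(t)$ be the roots of $z \mapsto P(z, e^{-i\omega t})$, $$u(x,t) = \alpha_0 + \sum_{l=1}^N u_{\beta_l(t-t_0)}(x-x_0)$$ is a solution of the Benjamin-Ono equation that is $2\pi$-periodic in $x$ and $T$-periodic in $t$. This gives a four-parameter family (parameters $s,s',x_0,t_0$) of time-periodic solutions connecting the traveling wave bifurcations $(N',\nu',N-1,m)$ and $(N,\nu,N-N',m)$: when $s'=0$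 the solution is an $N$-hump traveling wave (with speed index $\nu$ and period $T$), when $s=0$ it is an $N'$-hump traveling wave (with speed index $\nu'$ and period $T$), and when $s = s' = 0$ it is the constant solution $u(x,t) \equiv \frac{N^2\nu' - (N')^2\nu}{m}$.
   Context: The Benjamin-Ono equation is $u_t = Hu_{xx} - uu_x$, considered for $x \in \mathbb{R}/2\pi\mathbb{Z}$, where $H$ is the Hilbert transform with Fourier symbol $\hat H(k) = -i\,\mathrm{sgn}(k)$ (equivalently $Hf(x) = \frac{1}{\pi}\mathrm{PV}\int \frac{f(\xi)}{x-\xi}d\xi$). For $\beta$ in the open unit disk, writing $\beta = |\beta|e^{-i\theta}$, define $$u_\beta(x) = \frac{4|\beta|\{\cos(x-\theta) - |\beta|\}}{1 + |\beta|^2 - 2|\beta|\cos(x-\theta)},$$ whose Fourier coefficients are $2\beta^k$ for $k>0$, $0$ for $k=0$, $2\bar\beta^{|k|}$ for $k<0$ (so $u_0 \equiv 0$). For $\alpha_0 \in \mathbb{R}$, a positive integer $N$ and $\beta$ in the unit disk, the $N$-hump traveling wave is $u_{\alpha_0,N,\beta}(x,t) = \alpha_0 + \sum_{l=1}^N u_{\beta_l(t)}(x)$ with $\beta_l(t) = \sqrt[N]{\beta}\,e^{-ict}$ (the $\beta_l$ running over the $N$ distinct $N$th roots of $\beta$) and $c = \alpha_0 - N\frac{1-3|\beta|^2}{1-|\beta|^2}$; translates of it in $x$ and $t$ are also called $N$-hump traveling waves. Considered as a $T$-periodic solution, it has speed index $\nu \in \mathbb{Z}$ if $cT = 2\pi\nu/N$.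 Define $\omega_{N,n} = n(N-n)$ for $1 \le n \le N-1$ and $\omega_{N,n} = (n+1-N)\big[n+1+N\big(1 - \frac{1-3|\beta|^2}{1-|\beta|^2}\big)\big]$ for $n \ge N$. Such a traveling wave (with $N$ humps, speed index $\nu$, period $T$) is said to be at the bifurcation $(N,\nu,n,m)$ (with $n \ge 1$, $m\ge 1$ integers) if $\omega_{N,n}T = 2\pi m/N$ and $m \in n\nu + N\mathbb{Z}$ when $1 \le n < N$, respectively $m \in (n+1)\nu + N\mathbb{Z}$ when $n \ge N$; these are the values at which the linearization about the traveling wave admits non-trivial time-periodic solutions. *)

theory Defs
  imports "HOL-Analysis.Analysis" "HOL-Computational_Algebra.Polynomial"
begin

text \<open>The periodic profile u_beta(x), written exactly as in the paper with
  beta = |beta| e^{-i theta}, i.e. theta = - Arg beta.\<close>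
definition ubeta :: "complex \<Rightarrow> real \<Rightarrow> real" where
  "ubeta \<beta> x = (let r = cmod \<beta>; \<theta> = - Arg \<beta> in
     4 * r * (cos (x - \<theta>) - r) / (1 + r\<^sup>2 - 2 * r * cos (x - \<theta>)))"

definition fourier_coeff :: "(real \<Rightarrow> real) \<Rightarrow> int \<Rightarrow> complex" where
  "fourier_coeff f k =
     integral {0..2*pi} (\<lambda>x. complex_of_real (f x) * cis (- (of_int k * x))) / (2 * pi)"

definition hilbert_transform_of :: "(real \<Rightarrow> real) \<Rightarrow> (real \<Rightarrow> real) \<Rightarrow> bool" where
  "hilbert_transform_of f g \<longleftrightarrow>
     continuous_on UNIV f \<and> continuous_on UNIV g \<and>
     (\<forall>x. f (x + 2*pi) = f x) \<and> (\<forall>x. g (x + 2*pi) = g x) \<and>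
     (\<forall>k::int. fourier_coeff g k = - \<i> * of_int (sgn k) * fourier_coeff f k)"

text \<open>Classical solution of u_t = H u_xx - u u_x (u x t: space x, time t).\<close>
definition BO_solution :: "(real \<Rightarrow> real \<Rightarrow> real) \<Rightarrow> bool" where
  "BO_solution u \<longleftrightarrow>
     (\<forall>x t. (\<lambda>y. u y t) differentiable (at x) \<and>
            (\<lambda>y. deriv (\<lambda>z. u z t) y) differentiable (at x) \<and>
            (\<lambda>\<tau>. u x \<tau>) differentiable (at t)) \<and>
     (\<forall>t. hilbert_transform_of
            (\<lambda>x. deriv (\<lambda>y. deriv (\<lambda>z. u z t) y) x)
            (\<lambda>x. deriv (\<lambda>\<tau>. u x \<tau>) t + u x t * deriv (\<lambda>y. u y t) x))"

definition tw_speed :: "real \<Rightarrow> nat \<Rightarrow> complex \<Rightarrow> real" where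
  "tw_speed \<alpha>0 N \<beta> = \<alpha>0 - real N * (1 - 3 * (cmod \<beta>)\<^sup>2) / (1 - (cmod \<beta>)\<^sup>2)"

definition traveling_wave :: "real \<Rightarrow> nat \<Rightarrow> complex \<Rightarrow> real \<Rightarrow> real \<Rightarrow> real" where
  "traveling_wave \<alpha>0 N \<beta> x t =
     \<alpha>0 + (\<Sum>w\<in>{w. w ^ N = \<beta>}. ubeta (w * cis (- (tw_speed \<alpha>0 N \<beta> * t))) x)"

definition is_N_hump_tw :: "nat \<Rightarrow> int \<Rightarrow> real \<Rightarrow> (real \<Rightarrow> real \<Rightarrow> real) \<Rightarrow> bool" where
  "is_N_hump_tw N \<nu> T u \<longleftrightarrow>
     (\<exists>\<alpha>0 \<beta> x0 t0. cmod \<beta> < 1 \<and> tw_speed \<alpha>0 N \<beta> * T = 2 * pi * of_int \<nu> / real N \<and>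
        (\<forall>x t. u x t = traveling_wave \<alpha>0 N \<beta> (x - x0) (t - t0)))"

definition coefA :: "nat \<Rightarrow> nat \<Rightarrow> real \<Rightarrow> real \<Rightarrow> real" where
  "coefA N N' s s' =
     sqrt ((real N - real N' + s + s') / (real N + s + s')) *
     sqrt ((real N + s') * s' / (real N' * (real N - real N') + (real N + s') * s'))"

definition coefB :: "nat \<Rightarrow> nat \<Rightarrow> real \<Rightarrow> real \<Rightarrow> real" where
  "coefB N N' s s' =
     sqrt ((real N + s') * s' / (real N' * (real N - real N') + (real N + s') * s')) *
     sqrt (s / (real N - real N' + s))"

definition coefC :: "nat \<Rightarrow> nat \<Rightarrow> real \<Rightarrow> real \<Rightarrow> real" where
  "coefC N N' s s' =
     sqrt (s / (real N - real N' + s)) *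
     sqrt ((real N - real N' + s + s') / (real N + s + s'))"

definition BOpoly :: "nat \<Rightarrow> nat \<Rightarrow> int \<Rightarrow> int \<Rightarrow> real \<Rightarrow> real \<Rightarrow> complex \<Rightarrow> complex poly" where
  "BOpoly N N' \<nu> \<nu>' s s' lam =
     monom 1 N
     + monom (complex_of_real (coefA N N' s s') * lam powi \<nu>') (N - N')
     + monom (complex_of_real (coefB N N' s s') * lam powi (\<nu> - \<nu>')) N'
     + [: complex_of_real (coefC N N' s s') * lam powi \<nu> :]"

definition root_sum :: "complex poly \<Rightarrow> real \<Rightarrow> real" where
  "root_sum p x = (\<Sum>r\<in>{r. poly p r = 0}. real (order r p) * ubeta r x)"

end

theory Submission
  imports Defs "HOL-Complex_Analysis.Complex_Analysis"
    "HOL-Computational_Algebra.Fundamental_Theorem_Algebra"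
begin

text \<open>
  Put y = x - x0, X = e^{i(N' y - nu' omega (t - t0))} and Y = e^{i((N - N') y - (nu - nu') omega (t - t0))}.
  Then P(e^{-iy}, e^{-i omega (t - t0)}) = e^{-iNy} tau with tau = 1 + A X + B Y + C X Y, and summing the
  profiles u_beta over the roots by means of the logarithmic derivative of P gives
  u = alpha0 - 4 Re(-i tau_x / tau).  Since A = pq, B = qr, C = rp with p, q, r in [0,1), tau has no zeros
  for |X|, |Y| <= 1, which also places the roots of P in the unit disk.

  Substituting this form, u_t + u u_x - H u_xx becomes a combination of two Hirota bilinear expressions in
  tau and its conjugate; both vanish because of three quadratic relations between A, B, C, the wave numbers
  N', N - N' and the frequencies nu' omega, (nu - nu') omega -- these dispersion relations are what fix
  alpha0 and omega.  For the Hilbert transform, tau as a polynomial in z = e^{iy} has no zeros slightly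
  beyond the unit circle, so the relevant quantities are boundary values of functions holomorphic in a disc
  of radius greater than one that vanish at 0; their non-positive Fourier coefficients vanish by Cauchy's
  theorem.  If s' = 0 (resp. s = 0) two of A, B, C vanish and P becomes a binomial whose roots are those of
  a traveling wave.
\<close>

section \<open>Non-vanishing of the tau function\<close>

lemma tau_nonzero_polydisc:
  fixes p q r :: real and X Y :: complex
  assumes p: "0 \<le> p" "p < 1" and q: "0 \<le> q" "q < 1" and r: "0 \<le> r" "r < 1"
    and X: "cmod X \<le> 1" and Y: "cmod Y \<le> 1"
  shows "1 + of_real (p*q) * X + of_real (q*r) * Y + of_real (r*p) * X * Y \<noteq> 0"
proof
  assume "1 + of_real (p*q) * X + of_real (q*r) * Y + of_real (r*p) * X * Y = 0"
  then have "1 + of_real (p*q) * X = - (of_real r * Y * (of_real q + of_real p * X))"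
    by (simp add: algebra_simps eq_neg_iff_add_eq_0)
  then have "cmod (1 + of_real (p*q) * X) = r * cmod Y * cmod (of_real q + of_real p * X)"
    using r by (simp add: norm_mult)
  also have "\<dots> \<le> cmod (of_real q + of_real p * X)"
    using r Y by (simp add: mult_left_le_one_le mult_le_one)
  finally have le: "cmod (1 + of_real (p*q) * X) \<le> cmod (of_real q + of_real p * X)" .
  have "0 \<le> p * cmod X" "p * cmod X < 1"
    using p mult_left_le[OF X p(1)] by simp_all
  then have "p\<^sup>2 * (cmod X)\<^sup>2 < 1"
    by (simp add: abs_square_less_1 flip: power_mult_distrib)
  then have "0 < (1 - q\<^sup>2) * (1 - p\<^sup>2 * (cmod X)\<^sup>2)"
    using q by (simp add: abs_square_less_1)
  also have "\<dots> = (cmod (1 + of_real (p*q) * X))\<^sup>2 - (cmod (of_real q + of_real p * X))\<^sup>2"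
    unfolding cmod_power2 by (simp add: power2_eq_square algebra_simps)
  finally have "cmod (of_real q + of_real p * X) < cmod (1 + of_real (p*q) * X)"
    by (simp add: power_less_imp_less_base)
  with le show False by simp
qed

section \<open>Sums over the roots of a complex polynomial\<close>

lemma poly_logderiv_eq_sum_roots:
  fixes p :: "complex poly"
  shows "poly p z \<noteq> 0 \<Longrightarrow>
    poly (pderiv p) z / poly p z = (\<Sum>r\<in>{r. poly p r = 0}. of_nat (order r p) / (z - r))"
proof (induction p rule: poly_root_order_induct)
  case 0 then show ?case by simp
next
  case (no_roots p)
  then have "degree p = 0"
    using fundamental_theorem_of_algebra constant_degree by blast
  then have "pderiv p = 0" by (simp add: pderiv_eq_0_iff)
  moreover have "{r. poly p r = 0} = {}" using no_roots by auto
  ultimately show ?case by simp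
next
  case (root p x n)
  let ?q = "[:-x, 1:] ^ n * p"
  have pz: "poly p z \<noteq> 0" and zx: "z \<noteq> x" using root.prems root.hyps by auto
  have p0: "p \<noteq> 0" using root.hyps by auto
  have roots: "{r. poly ?q r = 0} = insert x {r. poly p r = 0}"
    using root.hyps by auto
  have order_x: "order x ?q = n"
    using root.hyps by (subst order_mult) (auto simp: order_power_n_n order_0I)
  have order_y: "order y ?q = order y p" if "poly p y = 0" for y
  proof -
    have "order y ([:-x,1:] ^ n) = 0" using that root.hyps by (intro order_0I) auto
    then show ?thesis using p0 root.hyps by (subst order_mult) auto
  qed
  obtain k where k: "n = Suc k" using root.hyps(1) by (cases n) auto
  have "poly (pderiv ?q) z / poly ?q z
      = (of_nat n * (z - x) ^ (n - 1) * poly p z + (z - x) ^ n * poly (pderiv p) z) / ((z - x) ^ n * poly p z)"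
    by (simp add: pderiv_mult pderiv_power pderiv_pCons algebra_simps)
  also have "\<dots> = of_nat n / (z - x) + poly (pderiv p) z / poly p z"
    using pz zx by (simp add: k field_simps)
  also have "\<dots> = of_nat (order x ?q) / (z - x) + (\<Sum>r\<in>{r. poly p r = 0}. of_nat (order r ?q) / (z - r))"
    using root.IH pz order_x order_y by simp
  also have "\<dots> = (\<Sum>r\<in>{r. poly ?q r = 0}. of_nat (order r ?q) / (z - r))"
    unfolding roots using p0 poly_roots_finite root.hyps by (subst sum.insert) auto
  finally show ?case .
qed

lemma sum_order_roots_eq_degree:
  fixes p :: "complex poly"
  assumes "p \<noteq> 0"
  shows "(\<Sum>r\<in>{r. poly p r = 0}. order r p) = degree p"
  using assms size_proots_complex[of p] by (simp add: size_multiset_overloaded_eq)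

section \<open>The profiles u_beta\<close>

lemma ubeta_zero [simp]: "ubeta 0 x = 0"
  by (simp add: ubeta_def)

lemma ubeta_periodic: "ubeta \<beta> (x + 2 * pi) = ubeta \<beta> x"
proof -
  have "cos (x + 2 * pi - a) = cos (x - a)" for a
    using cos_periodic[of "x - a"] by (simp add: algebra_simps)
  then show ?thesis by (simp add: ubeta_def Let_def)
qed

lemma Re_fraction_on_circle:
  fixes r c d :: real
  assumes "c\<^sup>2 + d\<^sup>2 = 1"
  shows "Re (Complex (r * c) (r * d) / (1 - Complex (r * c) (r * d))) = (r * c - r\<^sup>2) / (1 + r\<^sup>2 - 2 * r * c)"
proof -
  have "Re (Complex (r * c) (r * d) / (1 - Complex (r * c) (r * d)))
      = (r * c * (1 - r * c) - (r * d) * (r * d)) / ((1 - r * c)\<^sup>2 + (r * d)\<^sup>2)"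
    by (simp add: Re_divide power2_eq_square)
  also have "r * c * (1 - r * c) - (r * d) * (r * d) = r * c - r\<^sup>2 * (c\<^sup>2 + d\<^sup>2)"
    by (simp add: power2_eq_square algebra_simps)
  also have "(1 - r * c)\<^sup>2 + (r * d)\<^sup>2 = 1 + r\<^sup>2 * (c\<^sup>2 + d\<^sup>2) - 2 * r * c"
    by (simp add: power2_eq_square algebra_simps)
  finally show ?thesis using assms by simp
qed

lemma ubeta_eq_Re_fraction: "ubeta \<beta> x = 4 * Re (\<beta> * cis x / (1 - \<beta> * cis x))"
proof -
  define a where "a = x + Arg \<beta>"
  have "\<beta> * cis x = of_real (cmod \<beta>) * cis a"
    unfolding a_def by (metis cis_mult mult.assoc mult.commute rcis_cmod_Arg rcis_def)
  then have "\<beta> * cis x = Complex (cmod \<beta> * cos a) (cmod \<beta> * sin a)"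
    by (simp add: complex_eq_iff)
  then have "Re (\<beta> * cis x / (1 - \<beta> * cis x))
      = (cmod \<beta> * cos a - (cmod \<beta>)\<^sup>2) / (1 + (cmod \<beta>)\<^sup>2 - 2 * cmod \<beta> * cos a)"
    by (simp only: Re_fraction_on_circle[OF sin_cos_squared_add2])
  then show ?thesis
    unfolding ubeta_def Let_def by (simp add: a_def algebra_simps power2_eq_square)
qed

lemma root_sum_periodic: "root_sum p (x + 2 * pi) = root_sum p x"
  by (simp add: root_sum_def ubeta_periodic)

lemma root_sum_eq_Re_logderiv:
  fixes p :: "complex poly" and x :: real
  assumes p0: "p \<noteq> 0" and roots: "\<And>r. poly p r = 0 \<Longrightarrow> cmod r < 1"
  defines "\<zeta> \<equiv> cis (- x)"
  shows "root_sum p x = 4 * Re (\<zeta> * poly (pderiv p) \<zeta> / poly p \<zeta> - of_nat (degree p))"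
proof -
  let ?R = "{r. poly p r = 0}"
  have p\<zeta>: "poly p \<zeta> \<noteq> 0" using roots[of \<zeta>] by (auto simp: \<zeta>_def)
  have \<zeta>x: "\<zeta> * cis x = 1" by (simp add: \<zeta>_def cis_mult)
  have ubeta_r: "ubeta r x = 4 * Re (\<zeta> / (\<zeta> - r) - 1)" if "poly p r = 0" for r
  proof -
    have r1: "cmod r < 1" using roots that .
    have \<zeta>r: "\<zeta> - r \<noteq> 0" using p\<zeta> that by auto
    have \<zeta>0: "\<zeta> \<noteq> 0" by (simp add: \<zeta>_def)
    have "\<zeta> * (1 - r * cis x) = \<zeta> - r * (\<zeta> * cis x)" by (simp add: algebra_simps)
    then have e: "\<zeta> * (1 - r * cis x) = \<zeta> - r" by (simp add: \<zeta>x)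
    have "r * cis x / (1 - r * cis x) = \<zeta> * (r * cis x) / (\<zeta> * (1 - r * cis x))"
      using \<zeta>0 by simp
    also have "\<dots> = r / (\<zeta> - r)" by (simp add: e \<zeta>x mult.left_commute[of \<zeta>])
    also have "\<dots> = \<zeta> / (\<zeta> - r) - 1" using \<zeta>r by (simp add: field_simps)
    finally show ?thesis using ubeta_eq_Re_fraction by simp
  qed
  have "root_sum p x = (\<Sum>r\<in>?R. 4 * Re (of_nat (order r p) * (\<zeta> / (\<zeta> - r) - 1)))"
    unfolding root_sum_def by (intro sum.cong refl) (simp add: ubeta_r)
  also have "\<dots> = 4 * Re (\<Sum>r\<in>?R. of_nat (order r p) * (\<zeta> / (\<zeta> - r) - 1))"
    by (simp add: Re_sum sum_distrib_left)
  also have "(\<Sum>r\<in>?R. of_nat (order r p) * (\<zeta> / (\<zeta> - r) - 1))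
      = \<zeta> * (\<Sum>r\<in>?R. of_nat (order r p) / (\<zeta> - r)) - of_nat (\<Sum>r\<in>?R. order r p)"
    by (simp add: sum_distrib_left sum_subtractf algebra_simps)
  also have "\<dots> = \<zeta> * poly (pderiv p) \<zeta> / poly p \<zeta> - of_nat (degree p)"
    using poly_logderiv_eq_sum_roots[OF p\<zeta>] sum_order_roots_eq_degree[OF p0]
    by (simp flip: times_divide_eq_right)
  finally show ?thesis .
qed

section \<open>Binomials and traveling waves\<close>

lemma order_eq_1_if_pderiv_nonzero:
  fixes p :: "'a::field_char_0 poly"
  assumes "p \<noteq> 0" "poly p r = 0" "poly (pderiv p) r \<noteq> 0"
  shows "order r p = 1"
  using order_pderiv[OF assms(1,2)] order_0I[OF assms(3)] by simp

text \<open>The factor z^j only adds the root 0, where u_beta vanishes.\<close>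

lemma root_sum_binomial:
  fixes a :: complex
  assumes n: "n > 0"
  shows "root_sum (monom 1 j * (monom 1 n + [:a:])) x = (\<Sum>r\<in>{r. r ^ n = - a}. ubeta r x)"
proof -
  let ?b = "monom 1 n + [:a:] :: complex poly"
  let ?p = "monom 1 j * ?b"
  have poly_b: "poly ?b r = r ^ n + a" for r by (simp add: poly_monom)
  have "coeff ?b n = 1" using n by (simp add: coeff_monom coeff_pCons split: nat.split)
  then have b0: "?b \<noteq> 0" by (metis coeff_0 zero_neq_one)
  then have p0: "?p \<noteq> 0" by simp
  have roots: "{r. poly ?p r = 0} - {0} = {r. r ^ n = - a} - {0}"
    by (auto simp: poly_b poly_monom eq_neg_iff_add_eq_0)
  have order_p: "order r ?p = 1" if "r \<noteq> 0" "r ^ n = - a" for r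
  proof -
    have "order r (monom 1 j) = 0" using that by (intro order_0I) (simp add: poly_monom)
    moreover have "poly (pderiv ?b) r = of_nat n * r ^ (n - 1)"
      by (simp add: pderiv_add pderiv_monom pderiv_pCons poly_monom)
    then have "order r ?b = 1"
      using that n by (intro order_eq_1_if_pderiv_nonzero[OF b0]) (simp_all add: poly_b poly_monom)
    ultimately show ?thesis using p0 by (simp add: order_mult)
  qed
  have "{r. r ^ n = - a} \<subseteq> {r. poly ?b r = 0}" by (simp add: poly_monom subset_eq)
  then have fin: "finite {r. r ^ n = - a}"
    using poly_roots_finite[OF b0] by (rule finite_subset)
  have "root_sum ?p x = (\<Sum>r\<in>{r. poly ?p r = 0} - {0}. real (order r ?p) * ubeta r x)"
    unfolding root_sum_def using poly_roots_finite[OF p0] by (intro sum.mono_neutral_right) auto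
  also have "\<dots> = (\<Sum>r\<in>{r. r ^ n = - a} - {0}. ubeta r x)"
    unfolding roots by (intro sum.cong) (auto simp: order_p)
  also have "\<dots> = (\<Sum>r\<in>{r. r ^ n = - a}. ubeta r x)"
    using fin by (intro sum.mono_neutral_left) auto
  finally show ?thesis .
qed

lemma sum_roots_rotate:
  fixes \<beta> :: complex and f :: "complex \<Rightarrow> real"
  shows "(\<Sum>w\<in>{w. w ^ n = \<beta>}. f (w * cis \<phi>)) = (\<Sum>r\<in>{r. r ^ n = \<beta> * cis (real n * \<phi>)}. f r)"
proof -
  have "bij_betw (\<lambda>w. w * cis \<phi>) {w. w ^ n = \<beta>} {r. r ^ n = \<beta> * cis (real n * \<phi>)}"
  proof (rule bij_betw_byWitness[where f' = "\<lambda>r. r * cis (- \<phi>)"])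
    show "(\<lambda>w. w * cis \<phi>) ` {w. w ^ n = \<beta>} \<subseteq> {r. r ^ n = \<beta> * cis (real n * \<phi>)}"
      by (auto simp: power_mult_distrib Complex.DeMoivre)
    have "r ^ n * cis (- (real n * \<phi>)) = \<beta>" if "r ^ n = \<beta> * cis (real n * \<phi>)" for r
      using that by (simp add: cis_mult)
    then show "(\<lambda>r. r * cis (- \<phi>)) ` {r. r ^ n = \<beta> * cis (real n * \<phi>)} \<subseteq> {w. w ^ n = \<beta>}"
      by (auto simp: power_mult_distrib Complex.DeMoivre)
  qed (auto simp: cis_mult mult.assoc)
  then show ?thesis by (rule sum.reindex_bij_betw)
qed

lemma traveling_wave_eq_root_sum_binomial:
  assumes "n > 0"
  shows "traveling_wave \<alpha>0 n \<beta> x t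
       = \<alpha>0 + root_sum (monom 1 j * (monom 1 n + [: - \<beta> * cis (- (real n * tw_speed \<alpha>0 n \<beta> * t)) :])) x"
proof -
  have "traveling_wave \<alpha>0 n \<beta> x t
      = \<alpha>0 + (\<Sum>r\<in>{r. r ^ n = \<beta> * cis (real n * - (tw_speed \<alpha>0 n \<beta> * t))}. ubeta r x)"
    unfolding traveling_wave_def using sum_roots_rotate[where f = "\<lambda>r. ubeta r x"] by simp
  then show ?thesis by (simp add: root_sum_binomial[OF assms] mult.assoc)
qed

section \<open>Hilbert transform of boundary values of holomorphic functions\<close>

lemma Fourier_integral_nonpos_vanishes:
  assumes hol: "W holomorphic_on ball 0 \<rho>" and \<rho>: "1 < \<rho>" and W0: "W 0 = 0"
  shows "((\<lambda>x. W (cis x) * cis (real n * x)) has_integral 0) {0..2*pi}"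
proof -
  define V where "V = (\<lambda>z. if z = 0 then deriv W 0 else (W z - W 0) / (z - 0))"
  have V: "V holomorphic_on ball 0 \<rho>"
    unfolding V_def by (rule pole_lemma[OF hol]) (use \<rho> in auto)
  have VW: "V z * z = W z" for z
    by (cases "z = 0") (auto simp: V_def W0)
  define g where "g = (\<lambda>z. V z * z ^ n / \<i>)"
  have "g holomorphic_on ball 0 \<rho>"
    unfolding g_def by (intro holomorphic_intros V) auto
  moreover have "path_image (part_circlepath 0 1 0 (2*pi)) \<subseteq> ball 0 \<rho>"
    using path_image_part_circlepath_subset[of 0 "2*pi" 1 0] \<rho> by (auto simp: sphere_def)
  ultimately have "(g has_contour_integral 0) (part_circlepath 0 1 0 (2*pi))"
    by (intro Cauchy_theorem_convex_simple[OF _ convex_ball valid_path_part_circlepath])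
       (simp_all add: exp_two_pi_i' mult.commute)
  then have "((\<lambda>t. g (0 + 1 * cis t) * 1 * \<i> * cis t) has_integral 0) {0..2*pi}"
    by (subst (asm) has_contour_integral_part_circlepath_iff) auto
  moreover have "g (0 + 1 * cis t) * 1 * \<i> * cis t = W (cis t) * cis (real n * t)" for t
    using Complex.DeMoivre[of t n] by (simp add: g_def VW[symmetric] mult_ac)
  ultimately show ?thesis by simp
qed

text \<open>The Fourier coefficients c_k of W(e^{ix}) vanish for k <= 0 and those d_k of its conjugate for
  k >= 0; -4 Im W and 4 Re W have coefficients 2i(c_k - d_k) and 2(c_k + d_k).\<close>

lemma hilbert_transform_of_holomorphic:
  assumes hol: "W holomorphic_on ball 0 \<rho>" and \<rho>: "1 < \<rho>" and W0: "W 0 = 0"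
  shows "hilbert_transform_of (\<lambda>x. - 4 * Im (W (cis (x - x0)))) (\<lambda>x. 4 * Re (W (cis (x - x0))))"
proof -
  define W1 where "W1 = (\<lambda>z. W (z * cis (- x0)))"
  have W1x: "W (cis (x - x0)) = W1 (cis x)" for x
    by (simp add: W1_def cis_mult)
  have "(\<lambda>z. z * cis (- x0)) holomorphic_on ball 0 \<rho>"
    by (intro holomorphic_intros)
  moreover have "(\<lambda>z. z * cis (- x0)) ` ball 0 \<rho> \<subseteq> ball 0 \<rho>"
    by (auto simp: norm_mult)
  ultimately have hol1: "W1 holomorphic_on ball 0 \<rho>"
    unfolding W1_def using holomorphic_on_compose_gen[OF _ hol] by (simp add: o_def)
  have W10: "W1 0 = 0" by (simp add: W1_def W0)
  have contw: "continuous_on UNIV (\<lambda>x. W1 (cis x))"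
    using holomorphic_on_imp_continuous_on[OF hol1]
    by (rule continuous_on_compose2) (auto intro!: continuous_intros simp: \<rho>)
  define c where "c = (\<lambda>k::int. integral {0..2*pi} (\<lambda>x. W1 (cis x) * cis (- (of_int k * x))))"
  define d where "d = (\<lambda>k::int. integral {0..2*pi} (\<lambda>x. cnj (W1 (cis x)) * cis (- (of_int k * x))))"
  have int_c: "(\<lambda>x. W1 (cis x) * cis (- (of_int k * x))) integrable_on {0..2*pi}" for k :: int
    by (rule integrable_continuous_interval)
       (intro continuous_intros continuous_on_subset[OF contw], auto)
  have int_d: "(\<lambda>x. cnj (W1 (cis x)) * cis (- (of_int k * x))) integrable_on {0..2*pi}" for k :: int
    by (rule integrable_continuous_interval)
       (intro continuous_intros continuous_on_subset[OF contw], auto)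
  have c0: "c k = 0" if "k \<le> 0" for k :: int
  proof -
    have "real (nat (-k)) = - of_int k" using that by simp
    then show ?thesis
      using Fourier_integral_nonpos_vanishes[OF hol1 \<rho> W10, of "nat (-k)"]
      unfolding c_def by (simp add: integral_unique)
  qed
  have d0: "d k = 0" if "k \<ge> 0" for k :: int
  proof -
    have "d k = cnj (c (-k))"
      unfolding d_def c_def integral_cnj by (simp add: cis_cnj)
    then show ?thesis using c0[of "-k"] that by simp
  qed
  have coeff_Im: "fourier_coeff (\<lambda>x. - 4 * Im (W (cis (x - x0)))) k = 2 * \<i> * (c k - d k) / (2 * pi)" for k
  proof -
    have e: "complex_of_real (- 4 * Im (W (cis (x - x0)))) * cis (- (of_int k * x))
        = 2 * \<i> * (W1 (cis x) * cis (- (of_int k * x))) - 2 * \<i> * (cnj (W1 (cis x)) * cis (- (of_int k * x)))" for x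
      unfolding W1x by (simp add: complex_eq_iff algebra_simps)
    have "((\<lambda>x. 2 * \<i> * (W1 (cis x) * cis (- (of_int k * x))) - 2 * \<i> * (cnj (W1 (cis x)) * cis (- (of_int k * x))))
        has_integral (2 * \<i> * c k - 2 * \<i> * d k)) {0..2*pi}"
      unfolding c_def d_def
      by (intro has_integral_diff has_integral_mult_right integrable_integral int_c int_d)
    then show ?thesis unfolding fourier_coeff_def e
      by (simp add: integral_unique algebra_simps)
  qed
  have coeff_Re: "fourier_coeff (\<lambda>x. 4 * Re (W (cis (x - x0)))) k = 2 * (c k + d k) / (2 * pi)" for k
  proof -
    have e: "complex_of_real (4 * Re (W (cis (x - x0)))) * cis (- (of_int k * x))
        = 2 * (W1 (cis x) * cis (- (of_int k * x))) + 2 * (cnj (W1 (cis x)) * cis (- (of_int k * x)))" for x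
      unfolding W1x by (simp add: complex_eq_iff algebra_simps)
    have "((\<lambda>x. 2 * (W1 (cis x) * cis (- (of_int k * x))) + 2 * (cnj (W1 (cis x)) * cis (- (of_int k * x))))
        has_integral (2 * c k + 2 * d k)) {0..2*pi}"
      unfolding c_def d_def
      by (intro has_integral_add has_integral_mult_right integrable_integral int_c int_d)
    then show ?thesis unfolding fourier_coeff_def e
      by (simp add: integral_unique algebra_simps)
  qed
  have periodic: "cis (x + 2 * pi - x0) = cis (x - x0)" for x
    by (metis add.commute add_diff_eq cis_2pi cis_mult mult_1)
  show ?thesis unfolding hilbert_transform_of_def
  proof (intro conjI allI)
    show "continuous_on UNIV (\<lambda>x. - 4 * Im (W (cis (x - x0))))"
      "continuous_on UNIV (\<lambda>x. 4 * Re (W (cis (x - x0))))"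
      unfolding W1x by (intro continuous_intros contw)+
  next
    fix k :: int
    consider "k > 0" | "k = 0" | "k < 0" by linarith
    then show "fourier_coeff (\<lambda>x. 4 * Re (W (cis (x - x0)))) k =
          - \<i> * of_int (sgn k) * fourier_coeff (\<lambda>x. - 4 * Im (W (cis (x - x0)))) k"
      unfolding coeff_Im coeff_Re by cases (simp_all add: c0 d0 field_simps)
  qed (simp_all add: periodic)
qed

section \<open>Hirota bilinear identities\<close>

text \<open>For |X| = |Y| = 1, a is tau and Sg its conjugate.  The left-hand sides of the two expansions are
  tau * conj tau times the bilinear expressions of hirota_bilinear_0 and hirota_bilinear_1; the right-hand
  sides write them through the dispersion defects Q k om - kappa of the monomials of tau * conj tau.\<close>

lemma hirota_expansion_0:
  fixes k1 k2 O1 O2 a0 A B C X Y :: complex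
  assumes X: "X \<noteq> 0" and Y: "Y \<noteq> 0"
  defines "k3 \<equiv> k1 + k2" and "O3 \<equiv> O1 + O2"
  defines "\<kappa> \<equiv> O3 - a0*k3 + k3^2"
  defines "Q \<equiv> \<lambda>k om. om - a0*k + k^2"
  defines "a \<equiv> 1 + A*X + B*Y + C*X*Y" and "Sg \<equiv> 1 + A/X + B/Y + C/(X*Y)"
  defines "Pk \<equiv> \<lambda>j::nat. k1^j*A*X + k2^j*B*Y + k3^j*C*X*Y"
  defines "Pk' \<equiv> \<lambda>j::nat. k1^j*A/X + k2^j*B/Y + k3^j*C/(X*Y)"
  defines "PO \<equiv> O1*A*X + O2*B*Y + O3*C*X*Y" and "PO' \<equiv> O1*A/X + O2*B/Y + O3*C/(X*Y)"
  shows "PO*Sg + a*PO' - a0*(Pk 1*Sg + a*Pk' 1) + Pk 2*Sg + 2*Pk 1*Pk' 1 + a*Pk' 2 - \<kappa>*a*Sg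
     = (-\<kappa> + A^2*(Q (2*k1) (2*O1) - \<kappa>) + B^2*(Q (2*k2) (2*O2) - \<kappa>) + C^2*(Q (2*k3) (2*O3) - \<kappa>))
       + (A*(Q k1 O1 - \<kappa>) + B*C*(Q (k3+k2) (O3+O2) - \<kappa>)) * (X + 1/X)
       + (B*(Q k2 O2 - \<kappa>) + A*C*(Q (k3+k1) (O3+O1) - \<kappa>)) * (Y + 1/Y)"
  using X Y unfolding a_def Sg_def Pk_def Pk'_def PO_def PO'_def \<kappa>_def Q_def k3_def O3_def
  by (simp add: field_simps) (simp add: algebra_simps power2_eq_square)

lemma hirota_expansion_1:
  fixes k1 k2 O1 O2 a0 A B C X Y :: complex
  assumes X: "X \<noteq> 0" and Y: "Y \<noteq> 0"
  defines "k3 \<equiv> k1 + k2" and "O3 \<equiv> O1 + O2"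
  defines "\<kappa> \<equiv> O3 - a0*k3 + k3^2"
  defines "Q \<equiv> \<lambda>k om. om - a0*k + k^2"
  defines "a \<equiv> 1 + A*X + B*Y + C*X*Y" and "Sg \<equiv> 1 + A/X + B/Y + C/(X*Y)"
  defines "Pk \<equiv> \<lambda>j::nat. k1^j*A*X + k2^j*B*Y + k3^j*C*X*Y"
  defines "Pk' \<equiv> \<lambda>j::nat. k1^j*A/X + k2^j*B/Y + k3^j*C/(X*Y)"
  defines "PO \<equiv> O1*A*X + O2*B*Y + O3*C*X*Y" and "PO' \<equiv> O1*A/X + O2*B/Y + O3*C/(X*Y)"
  defines "PkO \<equiv> k1*O1*A*X + k2*O2*B*Y + k3*O3*C*X*Y" and "PkO' \<equiv> k1*O1*A/X + k2*O2*B/Y + k3*O3*C/(X*Y)"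
  shows "(PkO*Sg - PO*Pk' 1 + Pk 1*PO' - a*PkO' - a0*Pk 2*Sg + a0*a*Pk' 2 + Pk 3*Sg + Pk 2*Pk' 1 - Pk 1*Pk' 2 - a*Pk' 3)
          - \<kappa>*(Pk 1*Sg - a*Pk' 1)
     = k1*(A*(Q k1 O1 - \<kappa>) + B*C*(Q (k3+k2) (O3+O2) - \<kappa>)) * (X - 1/X)
       + k2*(B*(Q k2 O2 - \<kappa>) + A*C*(Q (k3+k1) (O3+O1) - \<kappa>)) * (Y - 1/Y)"
  using X Y unfolding a_def Sg_def Pk_def Pk'_def PO_def PO'_def PkO_def PkO'_def \<kappa>_def Q_def k3_def O3_def
  by (simp add: field_simps) (simp add: algebra_simps power2_eq_square power3_eq_cube)

lemma hirota_bilinear_0: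
  fixes k1 k2 k3 O1 O2 O3 a0 \<kappa> A B C X Y :: complex
  assumes X: "X \<noteq> 0" and Y: "Y \<noteq> 0" and k3: "k3 = k1 + k2" and O3: "O3 = O1 + O2"
    and \<kappa>: "\<kappa> = O3 - a0 * k3 + k3^2"
    and a: "1 + A * X + B * Y + C * X * Y \<noteq> 0" and sg: "1 + A / X + B / Y + C / (X * Y) \<noteq> 0"
    and h0: "- \<kappa> + A^2 * (2 * O1 - a0 * (2 * k1) + (2 * k1)^2 - \<kappa>) + B^2 * (2 * O2 - a0 * (2 * k2) + (2 * k2)^2 - \<kappa>)
              + C^2 * (2 * O3 - a0 * (2 * k3) + (2 * k3)^2 - \<kappa>) = 0"
    and hX: "A * (O1 - a0 * k1 + k1^2 - \<kappa>) + B * C * ((O3 + O2) - a0 * (k3 + k2) + (k3 + k2)^2 - \<kappa>) = 0"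
    and hY: "B * (O2 - a0 * k2 + k2^2 - \<kappa>) + A * C * ((O3 + O1) - a0 * (k3 + k1) + (k3 + k1)^2 - \<kappa>) = 0"
  defines "aa \<equiv> 1 + A * X + B * Y + C * X * Y" and "Sg \<equiv> 1 + A / X + B / Y + C / (X * Y)"
  defines "Pk \<equiv> \<lambda>j::nat. k1^j * A * X + k2^j * B * Y + k3^j * C * X * Y"
  defines "Pk' \<equiv> \<lambda>j::nat. k1^j * A / X + k2^j * B / Y + k3^j * C / (X * Y)"
  defines "PO \<equiv> O1 * A * X + O2 * B * Y + O3 * C * X * Y" and "PO' \<equiv> O1 * A / X + O2 * B / Y + O3 * C / (X * Y)"
  shows "PO / aa + PO' / Sg - a0 * (Pk 1 / aa + Pk' 1 / Sg) + Pk 2 / aa + Pk' 2 / Sg + 2 * (Pk 1 / aa) * (Pk' 1 / Sg) = \<kappa>"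
proof -
  have E: "PO * Sg + aa * PO' - a0 * (Pk 1 * Sg + aa * Pk' 1) + Pk 2 * Sg + 2 * Pk 1 * Pk' 1 + aa * Pk' 2 - \<kappa> * aa * Sg = 0"
    using hirota_expansion_0[where ?k1.0=k1 and ?k2.0=k2 and ?O1.0=O1 and ?O2.0=O2 and ?a0.0=a0 and A=A and B=B and C=C and X=X and Y=Y, OF X Y]
      h0 hX hY
    unfolding aa_def Sg_def Pk_def Pk'_def PO_def PO'_def k3 O3 \<kappa> by simp
  have a': "aa \<noteq> 0" "Sg \<noteq> 0" using a sg by (simp_all add: aa_def Sg_def)
  have "PO / aa + PO' / Sg - a0 * (Pk 1 / aa + Pk' 1 / Sg) + Pk 2 / aa + Pk' 2 / Sg + 2 * (Pk 1 / aa) * (Pk' 1 / Sg) - \<kappa>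
     = (PO * Sg + aa * PO' - a0 * (Pk 1 * Sg + aa * Pk' 1) + Pk 2 * Sg + 2 * Pk 1 * Pk' 1 + aa * Pk' 2 - \<kappa> * aa * Sg) / (aa * Sg)"
    using a' by (simp add: field_simps)
  thus ?thesis using E by simp
qed

lemma hirota_bilinear_1:
  fixes k1 k2 k3 O1 O2 O3 a0 \<kappa> A B C X Y :: complex
  assumes X: "X \<noteq> 0" and Y: "Y \<noteq> 0" and k3: "k3 = k1 + k2" and O3: "O3 = O1 + O2"
    and \<kappa>: "\<kappa> = O3 - a0 * k3 + k3^2"
    and a: "1 + A * X + B * Y + C * X * Y \<noteq> 0" and sg: "1 + A / X + B / Y + C / (X * Y) \<noteq> 0"
    and hX: "A * (O1 - a0 * k1 + k1^2 - \<kappa>) + B * C * ((O3 + O2) - a0 * (k3 + k2) + (k3 + k2)^2 - \<kappa>) = 0"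
    and hY: "B * (O2 - a0 * k2 + k2^2 - \<kappa>) + A * C * ((O3 + O1) - a0 * (k3 + k1) + (k3 + k1)^2 - \<kappa>) = 0"
  defines "aa \<equiv> 1 + A * X + B * Y + C * X * Y" and "Sg \<equiv> 1 + A / X + B / Y + C / (X * Y)"
  defines "Pk \<equiv> \<lambda>j::nat. k1^j * A * X + k2^j * B * Y + k3^j * C * X * Y"
  defines "Pk' \<equiv> \<lambda>j::nat. k1^j * A / X + k2^j * B / Y + k3^j * C / (X * Y)"
  defines "PO \<equiv> O1 * A * X + O2 * B * Y + O3 * C * X * Y" and "PO' \<equiv> O1 * A / X + O2 * B / Y + O3 * C / (X * Y)"
  defines "PkO \<equiv> k1 * O1 * A * X + k2 * O2 * B * Y + k3 * O3 * C * X * Y"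
      and "PkO' \<equiv> k1 * O1 * A / X + k2 * O2 * B / Y + k3 * O3 * C / (X * Y)"
  shows "PkO / aa - (PO / aa) * (Pk' 1 / Sg) + (Pk 1 / aa) * (PO' / Sg) - PkO' / Sg - a0 * (Pk 2 / aa)
          + a0 * (Pk' 2 / Sg) + Pk 3 / aa + (Pk 2 / aa) * (Pk' 1 / Sg) - (Pk 1 / aa) * (Pk' 2 / Sg) - Pk' 3 / Sg
         = \<kappa> * (Pk 1 / aa - Pk' 1 / Sg)"
proof -
  have E: "(PkO * Sg - PO * Pk' 1 + Pk 1 * PO' - aa * PkO' - a0 * Pk 2 * Sg + a0 * aa * Pk' 2 + Pk 3 * Sg
           + Pk 2 * Pk' 1 - Pk 1 * Pk' 2 - aa * Pk' 3) - \<kappa> * (Pk 1 * Sg - aa * Pk' 1) = 0"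
    using hirota_expansion_1[where ?k1.0=k1 and ?k2.0=k2 and ?O1.0=O1 and ?O2.0=O2 and ?a0.0=a0 and A=A and B=B and C=C and X=X and Y=Y, OF X Y]
      hX hY
    unfolding aa_def Sg_def Pk_def Pk'_def PO_def PO'_def PkO_def PkO'_def k3 O3 \<kappa> by simp
  have a': "aa \<noteq> 0" "Sg \<noteq> 0" using a sg by (simp_all add: aa_def Sg_def)
  have "PkO / aa - (PO / aa) * (Pk' 1 / Sg) + (Pk 1 / aa) * (PO' / Sg) - PkO' / Sg - a0 * (Pk 2 / aa)
          + a0 * (Pk' 2 / Sg) + Pk 3 / aa + (Pk 2 / aa) * (Pk' 1 / Sg) - (Pk 1 / aa) * (Pk' 2 / Sg) - Pk' 3 / Sg
         - \<kappa> * (Pk 1 / aa - Pk' 1 / Sg)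
     = ((PkO * Sg - PO * Pk' 1 + Pk 1 * PO' - aa * PkO' - a0 * Pk 2 * Sg + a0 * aa * Pk' 2 + Pk 3 * Sg
           + Pk 2 * Pk' 1 - Pk 1 * Pk' 2 - aa * Pk' 3) - \<kappa> * (Pk 1 * Sg - aa * Pk' 1)) / (aa * Sg)"
    using a' by (simp add: field_simps)
  thus ?thesis using E by simp
qed

lemma bo_residual_from_bilinear:
  fixes g1 g2 g3 h01 h11 G1 G2 G3 H01 H11 a0 :: complex
  shows "2*\<i>*((h11 - g1*h01) - (H11 - G1*H01)) + (a0 - 2*(g1 + G1)) * (-2*\<i>*((g2 - g1^2) - (G2 - G1^2)))
     + 2*\<i>*((g3 - 3*g1*g2 + 2*g1^3) - (G3 - 3*G1*G2 + 2*G1^3))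
     = 2*\<i>*((h11 - h01*G1 + g1*H01 - H11 - a0*g2 + a0*G2 + g3 + g2*G1 - g1*G2 - G3)
            - (h01 + H01 - a0*(g1 + G1) + g2 + G2 + 2*g1*G1) * (g1 - G1))"
  by (simp add: algebra_simps power2_eq_square power3_eq_cube)

section \<open>The four-parameter family\<close>

locale bo_family =
  fixes N N' :: nat and \<nu> \<nu>' m :: int and s s' x0 t0 \<alpha>0 \<omega> :: real
  assumes N'_bounds: "N' < N" "0 < N'" and s_nonneg: "0 \<le> s" "0 \<le> s'"
    and m_eq: "m = int N * \<nu>' - int N' * \<nu>" and m_pos: "m > 0"
    and \<alpha>0_eq: "\<alpha>0 = (real N ^ 2 * of_int \<nu>' - real N' ^ 2 * of_int \<nu>) / of_int m - 2 * s
                 - 2 * real N' * of_int (\<nu>' - \<nu>) / of_int m * s'"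
    and \<omega>_eq: "\<omega> = real N' * (real N - real N') * (real N + 2 * s') / of_int m"
begin

definition "P2 = (real N - real N' + s + s') / (real N + s + s')"
definition "Q2 = (real N + s') * s' / (real N' * (real N - real N') + (real N + s') * s')"
definition "R2 = s / (real N - real N' + s)"
definition "pp = sqrt P2"
definition "qq = sqrt Q2"
definition "rr = sqrt R2"

abbreviation "A \<equiv> coefA N N' s s'"
abbreviation "B \<equiv> coefB N N' s s'"
abbreviation "C \<equiv> coefC N N' s s'"

definition wave :: "real \<Rightarrow> real \<Rightarrow> real" where
  "wave x t = \<alpha>0 + root_sum (BOpoly N N' \<nu> \<nu>' s s' (cis (- (\<omega> * (t - t0))))) (x - x0)"

lemma m_real_pos: "real_of_int m > 0"
  using m_pos by simp

lemma \<omega>_pos: "\<omega> > 0"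
  using N'_bounds s_nonneg m_pos unfolding \<omega>_eq by (intro divide_pos_pos mult_pos_pos) auto

lemma P2_bounds: "0 \<le> P2" "P2 < 1"
  using N'_bounds s_nonneg by (auto simp: P2_def field_simps)

lemma Q2_bounds: "0 \<le> Q2" "Q2 < 1"
proof -
  have "real N' * (real N - real N') > 0" using N'_bounds by simp
  moreover have "0 \<le> (real N + s') * s'" using s_nonneg by simp
  ultimately show "0 \<le> Q2" "Q2 < 1" unfolding Q2_def by (simp_all add: divide_less_eq)
qed

lemma R2_bounds: "0 \<le> R2" "R2 < 1"
  using N'_bounds s_nonneg by (auto simp: R2_def field_simps)

lemma pqr_bounds: "0 \<le> pp" "pp < 1" "0 \<le> qq" "qq < 1" "0 \<le> rr" "rr < 1"
  using P2_bounds Q2_bounds R2_bounds by (auto simp: pp_def qq_def rr_def)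

lemma pqr_squares: "pp\<^sup>2 = P2" "qq\<^sup>2 = Q2" "rr\<^sup>2 = R2"
  using P2_bounds Q2_bounds R2_bounds by (simp_all add: pp_def qq_def rr_def)

lemma A_eq: "A = pp * qq" by (simp add: coefA_def pp_def qq_def P2_def Q2_def)
lemma B_eq: "B = qq * rr" by (simp add: coefB_def qq_def rr_def R2_def Q2_def)
lemma C_eq: "C = rr * pp" by (simp add: coefC_def pp_def rr_def P2_def R2_def)

lemma tau_nonzero:
  assumes "cmod X \<le> 1" "cmod Y \<le> 1"
  shows "1 + of_real A * X + of_real B * Y + of_real C * X * Y \<noteq> 0"
  using tau_nonzero_polydisc[OF pqr_bounds assms] unfolding A_eq B_eq C_eq by simp

lemma BOpoly_roots_in_disc:
  assumes lam: "cmod lam = 1" and z: "poly (BOpoly N N' \<nu> \<nu>' s s' lam) z = 0"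
  shows "cmod z < 1"
proof (rule ccontr)
  assume "\<not> cmod z < 1"
  then have z1: "cmod z \<ge> 1" by simp
  then have z0: "z \<noteq> 0" by auto
  define X where "X = lam powi \<nu>' * inverse z ^ N'"
  define Y where "Y = lam powi (\<nu> - \<nu>') * inverse z ^ (N - N')"
  have "cmod X \<le> 1" "cmod Y \<le> 1" unfolding X_def Y_def using lam z1
    by (simp_all add: norm_mult norm_power_int norm_power norm_inverse power_le_one inverse_le_1_iff)
  moreover have "poly (BOpoly N N' \<nu> \<nu>' s s' lam) z
      = z ^ N * (1 + of_real A * X + of_real B * Y + of_real C * X * Y)"
  proof -
    have "lam \<noteq> 0" using lam by auto
    then have XY: "X * Y = lam powi \<nu> * inverse z ^ N"
      unfolding X_def Y_def using N'_bounds
      by (simp add: power_int_add[symmetric] power_add[symmetric] algebra_simps)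
    have e1: "z ^ N * inverse z ^ N' = z ^ (N - N')" and e2: "z ^ N * inverse z ^ (N - N') = z ^ N'"
      and e3: "z ^ N * inverse z ^ N = 1"
      using N'_bounds z0 by (simp_all add: power_diff field_simps)
    have tA: "of_real A * lam powi \<nu>' * z ^ (N - N') = z ^ N * (of_real A * X)"
      unfolding X_def e1[symmetric] by (simp add: algebra_simps)
    have tB: "of_real B * lam powi (\<nu> - \<nu>') * z ^ N' = z ^ N * (of_real B * Y)"
      unfolding Y_def e2[symmetric] by (simp add: algebra_simps)
    have tC: "of_real C * lam powi \<nu> = z ^ N * (of_real C * X * Y)"
      unfolding mult.assoc XY using e3 by (simp add: algebra_simps)
    show ?thesis by (simp add: BOpoly_def poly_monom tA tB tC distrib_left)
  qed
  ultimately show False using z z0 tau_nonzero by simp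
qed

lemma degree_BOpoly: "degree (BOpoly N N' \<nu> \<nu>' s s' lam) = N"
proof (rule antisym)
  show "degree (BOpoly N N' \<nu> \<nu>' s s' lam) \<le> N"
    by (rule degree_le) (use N'_bounds in \<open>auto simp: BOpoly_def coeff_monom coeff_pCons split: nat.splits\<close>)
  show "N \<le> degree (BOpoly N N' \<nu> \<nu>' s s' lam)"
    by (rule le_degree) (use N'_bounds in \<open>auto simp: BOpoly_def coeff_monom coeff_pCons split: nat.splits\<close>)
qed

definition "k1 = real N'"
definition "k2 = real N - real N'"
definition "k3 = real N"
definition "O1 = of_int \<nu>' * \<omega>"
definition "O2 = of_int (\<nu> - \<nu>') * \<omega>"
definition "O3 = of_int \<nu> * \<omega>"

definition plane_wave :: "real \<Rightarrow> real \<Rightarrow> complex \<Rightarrow> complex \<Rightarrow> complex" where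
  "plane_wave k om w v = exp (\<i> * (of_real k * (w - of_real x0) - of_real om * (v - of_real t0)))"

text \<open>tau_moment j l is (-i d/dx)^j (i d/dt)^l applied to the non-constant part of tau.\<close>

definition tau_moment :: "nat \<Rightarrow> nat \<Rightarrow> complex \<Rightarrow> complex \<Rightarrow> complex" where
  "tau_moment j l w v = of_real (k1^j * O1^l * A) * plane_wave k1 O1 w v
     + of_real (k2^j * O2^l * B) * plane_wave k2 O2 w v + of_real (k3^j * O3^l * C) * plane_wave k3 O3 w v"

definition "tau w v = 1 + tau_moment 0 0 w v"

definition "tau_ratio j l w v = tau_moment j l w v / tau w v"

abbreviation "g j l x t \<equiv> tau_ratio j l (complex_of_real x) (complex_of_real t)"

lemma k3_eq: "k3 = k1 + k2" using N'_bounds by (simp add: k1_def k2_def k3_def)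
lemma O3_eq: "O3 = O1 + O2" by (simp add: O1_def O2_def O3_def algebra_simps)

lemma plane_wave_real: "plane_wave k om (of_real x) (of_real t) = cis (k * (x - x0) - om * (t - t0))"
  by (simp add: plane_wave_def cis_conv_exp)

lemma plane_wave_3: "plane_wave k3 O3 w v = plane_wave k1 O1 w v * plane_wave k2 O2 w v"
  unfolding plane_wave_def k3_eq O3_eq by (simp add: exp_add[symmetric] algebra_simps)

lemma plane_wave_nonzero: "plane_wave k om w v \<noteq> 0"
  by (simp add: plane_wave_def)

lemma tau_moment_split:
  "tau_moment j l w v = of_real (k1^j * O1^l * A) * plane_wave k1 O1 w v
     + of_real (k2^j * O2^l * B) * plane_wave k2 O2 w v
     + of_real (k3^j * O3^l * C) * (plane_wave k1 O1 w v * plane_wave k2 O2 w v)"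
  by (simp add: tau_moment_def plane_wave_3)

lemma tau_real_nonzero: "tau (of_real x) (of_real t) \<noteq> 0"
  using tau_nonzero[of "plane_wave k1 O1 (of_real x) (of_real t)" "plane_wave k2 O2 (of_real x) (of_real t)"]
  unfolding tau_def tau_moment_split by (simp add: plane_wave_real mult.assoc add.assoc)

lemma BOpoly_at_phase:
  fixes x t :: real
  defines "\<zeta> \<equiv> cis (- (x - x0))" and "lam \<equiv> cis (- (\<omega> * (t - t0)))"
    and "X \<equiv> plane_wave k1 O1 (of_real x) (of_real t)" and "Y \<equiv> plane_wave k2 O2 (of_real x) (of_real t)"
  shows "poly (BOpoly N N' \<nu> \<nu>' s s' lam) \<zeta> = \<zeta> ^ N * (1 + of_real A * X + of_real B * Y + of_real C * (X * Y))"
    and "\<zeta> * poly (pderiv (BOpoly N N' \<nu> \<nu>' s s' lam)) \<zeta>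
       = \<zeta> ^ N * (of_nat N + of_real k2 * of_real A * X + of_real k1 * of_real B * Y)"
proof -
  have h1: "lam powi \<nu>' * \<zeta> ^ (N - N') = \<zeta> ^ N * X"
    unfolding lam_def \<zeta>_def X_def plane_wave_real cis_power_int Complex.DeMoivre cis_mult
    using N'_bounds by (simp add: k1_def O1_def algebra_simps of_nat_diff)
  have h2: "lam powi (\<nu> - \<nu>') * \<zeta> ^ N' = \<zeta> ^ N * Y"
    unfolding lam_def \<zeta>_def Y_def plane_wave_real cis_power_int Complex.DeMoivre cis_mult
    using N'_bounds by (simp add: k2_def O2_def algebra_simps of_nat_diff)
  have h3: "lam powi \<nu> = \<zeta> ^ N * (X * Y)"
    unfolding lam_def \<zeta>_def X_def Y_def plane_wave_real cis_power_int Complex.DeMoivre cis_mult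
    using N'_bounds by (simp add: k1_def k2_def O1_def O2_def algebra_simps of_nat_diff)
  have "poly (BOpoly N N' \<nu> \<nu>' s s' lam) \<zeta> = \<zeta> ^ N + of_real A * (lam powi \<nu>' * \<zeta> ^ (N - N'))
      + of_real B * (lam powi (\<nu> - \<nu>') * \<zeta> ^ N') + of_real C * lam powi \<nu>"
    by (simp add: BOpoly_def poly_monom algebra_simps)
  then show "poly (BOpoly N N' \<nu> \<nu>' s s' lam) \<zeta> = \<zeta> ^ N * (1 + of_real A * X + of_real B * Y + of_real C * (X * Y))"
    unfolding h1 h2 h3 by (simp add: algebra_simps)
  have "\<zeta> * poly (pderiv (BOpoly N N' \<nu> \<nu>' s s' lam)) \<zeta> = of_nat N * (\<zeta> * \<zeta> ^ (N - 1))
      + of_nat (N - N') * of_real A * (lam powi \<nu>' * (\<zeta> * \<zeta> ^ (N - N' - 1)))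
      + of_nat N' * of_real B * (lam powi (\<nu> - \<nu>') * (\<zeta> * \<zeta> ^ (N' - 1)))"
    by (simp add: BOpoly_def pderiv_add pderiv_monom pderiv_pCons poly_monom algebra_simps)
  also have "\<dots> = of_nat N * \<zeta> ^ N + of_nat (N - N') * of_real A * (lam powi \<nu>' * \<zeta> ^ (N - N'))
      + of_nat N' * of_real B * (lam powi (\<nu> - \<nu>') * \<zeta> ^ N')"
  proof -
    have "\<zeta> * \<zeta> ^ (N - 1) = \<zeta> ^ N" "\<zeta> * \<zeta> ^ (N - N' - 1) = \<zeta> ^ (N - N')"
      "\<zeta> * \<zeta> ^ (N' - 1) = \<zeta> ^ N'"
      using N'_bounds by (simp_all flip: power_Suc add: Suc_diff_Suc)
    then show ?thesis by simp
  qed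
  finally show "\<zeta> * poly (pderiv (BOpoly N N' \<nu> \<nu>' s s' lam)) \<zeta>
      = \<zeta> ^ N * (of_nat N + of_real k2 * of_real A * X + of_real k1 * of_real B * Y)"
    unfolding h1 h2 using N'_bounds by (simp add: k1_def k2_def of_nat_diff algebra_simps)
qed

lemma wave_eq_tau_ratio: "wave x t = \<alpha>0 - 4 * Re (g 1 0 x t)"
proof -
  define P where "P = BOpoly N N' \<nu> \<nu>' s s' (cis (- (\<omega> * (t - t0))))"
  define \<zeta> where "\<zeta> = cis (- (x - x0))"
  define X where "X = plane_wave k1 O1 (of_real x) (of_real t)"
  define Y where "Y = plane_wave k2 O2 (of_real x) (of_real t)"
  have P0: "P \<noteq> 0" using degree_BOpoly N'_bounds unfolding P_def by (metis degree_0 less_irrefl not_less0)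
  have roots: "cmod r < 1" if "poly P r = 0" for r
    using BOpoly_roots_in_disc[OF _ that[unfolded P_def]] by simp
  have "root_sum P (x - x0) = 4 * Re (\<zeta> * poly (pderiv P) \<zeta> / poly P \<zeta> - of_nat (degree P))"
    unfolding \<zeta>_def by (rule root_sum_eq_Re_logderiv[OF P0 roots])
  also have "\<zeta> * poly (pderiv P) \<zeta> / poly P \<zeta> - of_nat (degree P) = - g 1 0 x t"
  proof -
    define D where "D = of_nat N + of_real k2 * of_real A * X + of_real k1 * of_real B * Y"
    have "(of_nat N :: complex) = of_real k1 + of_real k2" "(of_real k3 :: complex) = of_real k1 + of_real k2"
      using N'_bounds by (simp_all add: k1_def k2_def k3_def of_nat_diff)
    then have D_eq: "D - of_nat N * tau (of_real x) (of_real t) = - tau_moment 1 0 (of_real x) (of_real t)"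
      by (simp add: D_def tau_def tau_moment_split X_def Y_def algebra_simps)
    have "poly P \<zeta> = \<zeta> ^ N * tau (of_real x) (of_real t)" "\<zeta> * poly (pderiv P) \<zeta> = \<zeta> ^ N * D"
      using BOpoly_at_phase[where x = x and t = t]
      by (simp_all add: P_def \<zeta>_def X_def Y_def D_def tau_def tau_moment_split mult.assoc)
    then have "\<zeta> * poly (pderiv P) \<zeta> / poly P \<zeta> - of_nat (degree P)
        = \<zeta> ^ N * D / (\<zeta> ^ N * tau (of_real x) (of_real t)) - of_nat N"
      by (simp add: P_def degree_BOpoly)
    also have "\<dots> = (D - of_nat N * tau (of_real x) (of_real t)) / tau (of_real x) (of_real t)"
      using tau_real_nonzero[of x t] by (simp add: \<zeta>_def field_simps)
    finally show ?thesis by (simp add: D_eq tau_ratio_def)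
  qed
  finally show ?thesis by (simp add: wave_def P_def)
qed

lemma plane_wave_dx: "((\<lambda>w. plane_wave k om w v) has_field_derivative (\<i> * of_real k * plane_wave k om w v)) (at w)"
  unfolding plane_wave_def by (auto intro!: derivative_eq_intros simp: algebra_simps)

lemma plane_wave_dt: "((\<lambda>v. plane_wave k om w v) has_field_derivative (- \<i> * of_real om * plane_wave k om w v)) (at v)"
  unfolding plane_wave_def by (auto intro!: derivative_eq_intros simp: algebra_simps)

lemma tau_moment_dx: "((\<lambda>w. tau_moment j l w v) has_field_derivative (\<i> * tau_moment (Suc j) l w v)) (at w)"
  unfolding tau_moment_def by (rule derivative_eq_intros plane_wave_dx refl)+ (simp add: algebra_simps)

lemma tau_moment_dt: "((\<lambda>v. tau_moment j l w v) has_field_derivative (- \<i> * tau_moment j (Suc l) w v)) (at v)"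
  unfolding tau_moment_def by (rule derivative_eq_intros plane_wave_dt refl)+ (simp add: algebra_simps)

lemma tau_ratio_dx:
  assumes "tau w v \<noteq> 0"
  shows "((\<lambda>w. tau_ratio j l w v) has_field_derivative
           (\<i> * (tau_ratio (Suc j) l w v - tau_ratio j l w v * tau_ratio 1 0 w v))) (at w)"
proof -
  have "((\<lambda>w. tau w v) has_field_derivative (\<i> * tau_moment 1 0 w v)) (at w)"
    unfolding tau_def using tau_moment_dx[of 0 0] by (auto intro!: derivative_eq_intros)
  from DERIV_divide[OF tau_moment_dx this assms] show ?thesis
    unfolding tau_ratio_def using assms by (simp add: field_simps)
qed

lemma tau_ratio_dt:
  assumes "tau w v \<noteq> 0"
  shows "((\<lambda>v. tau_ratio j l w v) has_field_derivative
           (- \<i> * (tau_ratio j (Suc l) w v - tau_ratio j l w v * tau_ratio 0 1 w v))) (at v)"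
proof -
  have "((\<lambda>v. tau w v) has_field_derivative (- \<i> * tau_moment 0 1 w v)) (at v)"
    unfolding tau_def using tau_moment_dt[of 0 0] by (auto intro!: derivative_eq_intros)
  from DERIV_divide[OF tau_moment_dt this assms] show ?thesis
    unfolding tau_ratio_def using assms by (simp add: field_simps)
qed

definition "wave_x x t = 4 * Im (g 2 0 x t - (g 1 0 x t)\<^sup>2)"
definition "G x t = g 3 0 x t - 3 * g 1 0 x t * g 2 0 x t + 2 * (g 1 0 x t)^3"
definition "wave_xx x t = 4 * Re (G x t)"
definition "wave_t x t = - 4 * Im (g 1 1 x t - g 1 0 x t * g 0 1 x t)"

lemma DERIV_wave_x: "((\<lambda>y. wave y t) has_real_derivative wave_x x t) (at x)"
proof -
  have "((\<lambda>w. tau_ratio 1 0 w (of_real t)) has_field_derivative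
      (\<i> * (g 2 0 x t - g 1 0 x t * g 1 0 x t))) (at (of_real x))"
    using tau_ratio_dx[OF tau_real_nonzero, of 1 0] by (simp only: Suc_1)
  then have "((\<lambda>y. g 1 0 y t) has_vector_derivative (\<i> * (g 2 0 x t - g 1 0 x t * g 1 0 x t))) (at x)"
    by (rule has_vector_derivative_real_field)
  then have "((\<lambda>y. \<alpha>0 - 4 * Re (g 1 0 y t)) has_real_derivative
      (0 - 4 * Re (\<i> * (g 2 0 x t - g 1 0 x t * g 1 0 x t)))) (at x)"
    by (intro DERIV_diff DERIV_const DERIV_cmult has_field_derivative_Re)
  then show ?thesis unfolding wave_eq_tau_ratio wave_x_def by (simp add: power2_eq_square)
qed

lemma DERIV_wave_xx: "((\<lambda>y. wave_x y t) has_real_derivative wave_xx x t) (at x)"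
proof -
  have nz: "tau (of_real x) (of_real t) \<noteq> 0" by (rule tau_real_nonzero)
  have "((\<lambda>w. tau_ratio 2 0 w (of_real t) - tau_ratio 1 0 w (of_real t) * tau_ratio 1 0 w (of_real t))
      has_field_derivative (\<i> * (g 3 0 x t - g 2 0 x t * g 1 0 x t)
        - (\<i> * (g 2 0 x t - g 1 0 x t * g 1 0 x t) * g 1 0 x t
           + \<i> * (g 2 0 x t - g 1 0 x t * g 1 0 x t) * g 1 0 x t))) (at (of_real x))"
    using tau_ratio_dx[OF nz, of 2 0] tau_ratio_dx[OF nz, of 1 0]
    by (intro DERIV_diff DERIV_mult) (simp_all add: numeral_2_eq_2 numeral_3_eq_3)
  also have "\<i> * (g 3 0 x t - g 2 0 x t * g 1 0 x t)
        - (\<i> * (g 2 0 x t - g 1 0 x t * g 1 0 x t) * g 1 0 x t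
           + \<i> * (g 2 0 x t - g 1 0 x t * g 1 0 x t) * g 1 0 x t) = \<i> * G x t"
    unfolding G_def by (simp add: algebra_simps power2_eq_square power3_eq_cube)
  finally have "((\<lambda>y. g 2 0 y t - g 1 0 y t * g 1 0 y t) has_vector_derivative \<i> * G x t) (at x)"
    by (rule has_vector_derivative_real_field)
  then have "((\<lambda>y. 4 * Im (g 2 0 y t - g 1 0 y t * g 1 0 y t)) has_real_derivative 4 * Im (\<i> * G x t)) (at x)"
    by (intro DERIV_cmult has_field_derivative_Im)
  then show ?thesis unfolding wave_x_def wave_xx_def by (simp add: power2_eq_square)
qed

lemma DERIV_wave_t: "((\<lambda>\<tau>. wave x \<tau>) has_real_derivative wave_t x t) (at t)"
proof -
  have "((\<lambda>v. tau_ratio 1 0 (of_real x) v) has_field_derivative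
      (- \<i> * (g 1 1 x t - g 1 0 x t * g 0 1 x t))) (at (of_real t))"
    using tau_ratio_dt[OF tau_real_nonzero, of 1 0] by (simp only: One_nat_def)
  then have "((\<lambda>\<tau>. g 1 0 x \<tau>) has_vector_derivative (- \<i> * (g 1 1 x t - g 1 0 x t * g 0 1 x t))) (at t)"
    by (rule has_vector_derivative_real_field)
  then have "((\<lambda>\<tau>. \<alpha>0 - 4 * Re (g 1 0 x \<tau>)) has_real_derivative
      (0 - 4 * Re (- \<i> * (g 1 1 x t - g 1 0 x t * g 0 1 x t)))) (at t)"
    by (intro DERIV_diff DERIV_const DERIV_cmult has_field_derivative_Re)
  then show ?thesis unfolding wave_eq_tau_ratio wave_t_def by simp
qed

definition "dispersion k om = om - \<alpha>0 * k + k\<^sup>2"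
definition "\<kappa> = dispersion k3 O3"

definition "\<omega>_num = real N' * (real N - real N') * (real N + 2 * s')"
definition "\<alpha>0_num = real N ^ 2 * of_int \<nu>' - real N' ^ 2 * of_int \<nu> - 2 * s * of_int m
                      - 2 * real N' * (of_int \<nu>' - of_int \<nu>) * s'"
definition "\<kappa>_num = of_int \<nu> * \<omega>_num - \<alpha>0_num * real N + real N ^ 2 * of_int m"
definition "defect k c = c * \<omega>_num - \<alpha>0_num * k + k\<^sup>2 * of_int m - \<kappa>_num"

lemma m_real_eq: "real_of_int m = real N * of_int \<nu>' - real N' * of_int \<nu>"
  by (simp add: m_eq)

lemma \<omega>_fraction: "\<omega> = \<omega>_num / of_int m"
  by (simp add: \<omega>_eq \<omega>_num_def)

lemma \<alpha>0_fraction: "\<alpha>0 = \<alpha>0_num / of_int m"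
  using m_real_pos by (simp add: \<alpha>0_eq \<alpha>0_num_def field_simps)

lemma \<kappa>_fraction: "\<kappa> = \<kappa>_num / of_int m"
proof -
  have "\<kappa> = of_int \<nu> * \<omega> - \<alpha>0 * real N + (real N)\<^sup>2"
    by (simp add: \<kappa>_def dispersion_def O3_def k3_def)
  also have "\<dots> = \<kappa>_num / of_int m"
    using m_real_pos unfolding \<omega>_fraction \<alpha>0_fraction \<kappa>_num_def by (simp add: field_simps)
  finally show ?thesis .
qed

lemma dispersion_defect: "dispersion k (c * \<omega>) - \<kappa> = defect k c / of_int m"
proof -
  have "dispersion k (c * \<omega>) - \<kappa> = c * \<omega> - \<alpha>0 * k + k\<^sup>2 - \<kappa>_num / of_int m"
    by (simp add: dispersion_def \<kappa>_fraction)
  also have "\<dots> = defect k c / of_int m"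
    using m_real_pos unfolding \<omega>_fraction \<alpha>0_fraction defect_def by (simp add: field_simps)
  finally show ?thesis .
qed

lemma dispersion_defects:
  "dispersion k1 O1 - \<kappa> = defect (real N') (of_int \<nu>') / of_int m"
  "dispersion k2 O2 - \<kappa> = defect (real N - real N') (of_int \<nu> - of_int \<nu>') / of_int m"
  "dispersion (k3 + k2) (O3 + O2) - \<kappa> = defect (2 * real N - real N') (2 * of_int \<nu> - of_int \<nu>') / of_int m"
  "dispersion (k3 + k1) (O3 + O1) - \<kappa> = defect (real N + real N') (of_int \<nu> + of_int \<nu>') / of_int m"
  "dispersion (2 * k1) (2 * O1) - \<kappa> = defect (2 * real N') (2 * of_int \<nu>') / of_int m"
  "dispersion (2 * k2) (2 * O2) - \<kappa> = defect (2 * (real N - real N')) (2 * (of_int \<nu> - of_int \<nu>')) / of_int m"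
  "dispersion (2 * k3) (2 * O3) - \<kappa> = defect (2 * real N) (2 * of_int \<nu>) / of_int m"
  by (simp_all add: dispersion_defect[symmetric] k1_def k2_def k3_def O1_def O2_def O3_def algebra_simps)

lemma defect_identity_X:
  "defect (real N') (of_int \<nu>') * (real N - real N' + s)
   + s * defect (2 * real N - real N') (2 * of_int \<nu> - of_int \<nu>') = 0"
  unfolding defect_def \<kappa>_num_def \<alpha>0_num_def \<omega>_num_def m_real_eq by (simp add: algebra_simps power2_eq_square)

lemma defect_identity_Y:
  "defect (real N - real N') (of_int \<nu> - of_int \<nu>') * (real N + s + s')
   + (real N - real N' + s + s') * defect (real N + real N') (of_int \<nu> + of_int \<nu>') = 0"
  unfolding defect_def \<kappa>_num_def \<alpha>0_num_def \<omega>_num_def m_real_eq by (simp add: algebra_simps power2_eq_square)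

lemma defect_identity_const:
  "- \<kappa>_num * (real N + s + s') * (real N' * (real N - real N') + (real N + s') * s') * (real N - real N' + s)
   + (real N - real N' + s + s') * ((real N + s') * s') * (real N - real N' + s) * defect (2 * real N') (2 * of_int \<nu>')
   + ((real N + s') * s') * s * (real N + s + s') * defect (2 * (real N - real N')) (2 * (of_int \<nu> - of_int \<nu>'))
   + s * (real N - real N' + s + s') * (real N' * (real N - real N') + (real N + s') * s') * defect (2 * real N) (2 * of_int \<nu>)
   = 0"
  unfolding defect_def \<kappa>_num_def \<alpha>0_num_def \<omega>_num_def m_real_eq by (simp add: algebra_simps power2_eq_square)

lemma denominators_pos:
  "real N + s + s' > 0" "real N' * (real N - real N') + (real N + s') * s' > 0" "real N - real N' + s > 0"
  using N'_bounds s_nonneg by (simp_all add: add_pos_nonneg)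

lemma dispersion_relations:
  "A * (dispersion k1 O1 - \<kappa>) + B * C * (dispersion (k3 + k2) (O3 + O2) - \<kappa>) = 0"
  "B * (dispersion k2 O2 - \<kappa>) + A * C * (dispersion (k3 + k1) (O3 + O1) - \<kappa>) = 0"
  "- \<kappa> + A\<^sup>2 * (dispersion (2 * k1) (2 * O1) - \<kappa>) + B\<^sup>2 * (dispersion (2 * k2) (2 * O2) - \<kappa>)
     + C\<^sup>2 * (dispersion (2 * k3) (2 * O3) - \<kappa>) = 0"
proof -
  have sq: "A\<^sup>2 = P2 * Q2" "B\<^sup>2 = Q2 * R2" "C\<^sup>2 = R2 * P2" "B * C = A * R2" "A * C = B * P2"
    unfolding A_eq B_eq C_eq pqr_squares[symmetric] by (simp_all add: power2_eq_square)
  have combine: "a / d + c / e * (b / d) = 0" if "d \<noteq> 0" "e \<noteq> 0" "a * e + c * b = 0" for a b c d e :: real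
  proof -
    have "a / d + c / e * (b / d) = (a * e + c * b) / (e * d)" using that by (simp add: field_simps)
    then show ?thesis using that by simp
  qed
  have combine3: "- (K / d) + a / e * (b / f) * (u / d) + b / f * (c / h) * (v / d) + c / h * (a / e) * (w / d) = 0"
    if "d \<noteq> 0" "e \<noteq> 0" "f \<noteq> 0" "h \<noteq> 0"
      "- K * e * f * h + a * b * h * u + b * c * e * v + c * a * f * w = 0" for K a b c d e f h u v w :: real
  proof -
    have "- (K / d) + a / e * (b / f) * (u / d) + b / f * (c / h) * (v / d) + c / h * (a / e) * (w / d)
        = (- K * e * f * h + a * b * h * u + b * c * e * v + c * a * f * w) / (d * e * f * h)"
      using that by (simp add: field_simps)
    then show ?thesis using that by simp
  qed
  have hX: "dispersion k1 O1 - \<kappa> + R2 * (dispersion (k3 + k2) (O3 + O2) - \<kappa>) = 0"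
    unfolding dispersion_defects R2_def
    by (rule combine[OF _ _ defect_identity_X]) (use denominators_pos m_real_pos in auto)
  show "A * (dispersion k1 O1 - \<kappa>) + B * C * (dispersion (k3 + k2) (O3 + O2) - \<kappa>) = 0"
    unfolding sq mult.assoc using arg_cong[OF hX, of "(*) _"] by (simp only: distrib_left mult_zero_right)
  have hY: "dispersion k2 O2 - \<kappa> + P2 * (dispersion (k3 + k1) (O3 + O1) - \<kappa>) = 0"
    unfolding dispersion_defects P2_def
    by (rule combine[OF _ _ defect_identity_Y]) (use denominators_pos m_real_pos in auto)
  show "B * (dispersion k2 O2 - \<kappa>) + A * C * (dispersion (k3 + k1) (O3 + O1) - \<kappa>) = 0"
    unfolding sq mult.assoc using arg_cong[OF hY, of "(*) _"] by (simp only: distrib_left mult_zero_right)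
  show "- \<kappa> + A\<^sup>2 * (dispersion (2 * k1) (2 * O1) - \<kappa>) + B\<^sup>2 * (dispersion (2 * k2) (2 * O2) - \<kappa>)
     + C\<^sup>2 * (dispersion (2 * k3) (2 * O3) - \<kappa>) = 0"
    unfolding sq dispersion_defects P2_def Q2_def R2_def unfolding \<kappa>_fraction
    by (rule combine3[OF _ _ _ _ defect_identity_const]) (use denominators_pos m_real_pos in auto)
qed

lemma dispersion_relations_complex:
  "of_real A * (of_real O1 - of_real \<alpha>0 * of_real k1 + (of_real k1)\<^sup>2 - of_real \<kappa>)
     + of_real B * of_real C * ((of_real O3 + of_real O2) - of_real \<alpha>0 * (of_real k3 + of_real k2)
     + (of_real k3 + of_real k2)\<^sup>2 - of_real \<kappa>) = (0 :: complex)"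
  "of_real B * (of_real O2 - of_real \<alpha>0 * of_real k2 + (of_real k2)\<^sup>2 - of_real \<kappa>)
     + of_real A * of_real C * ((of_real O3 + of_real O1) - of_real \<alpha>0 * (of_real k3 + of_real k1)
     + (of_real k3 + of_real k1)\<^sup>2 - of_real \<kappa>) = (0 :: complex)"
  "- of_real \<kappa> + (of_real A)\<^sup>2 * (2 * of_real O1 - of_real \<alpha>0 * (2 * of_real k1) + (2 * of_real k1)\<^sup>2 - of_real \<kappa>)
     + (of_real B)\<^sup>2 * (2 * of_real O2 - of_real \<alpha>0 * (2 * of_real k2) + (2 * of_real k2)\<^sup>2 - of_real \<kappa>)
     + (of_real C)\<^sup>2 * (2 * of_real O3 - of_real \<alpha>0 * (2 * of_real k3) + (2 * of_real k3)\<^sup>2 - of_real \<kappa>) = (0 :: complex)"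
  using arg_cong[OF dispersion_relations(1), of complex_of_real]
    arg_cong[OF dispersion_relations(2), of complex_of_real]
    arg_cong[OF dispersion_relations(3), of complex_of_real]
  by (simp_all add: dispersion_def)

lemma tau_at_real_point:
  fixes x t :: real
  defines "X \<equiv> plane_wave k1 O1 (of_real x) (of_real t)" and "Y \<equiv> plane_wave k2 O2 (of_real x) (of_real t)"
  shows "X \<noteq> 0" "Y \<noteq> 0"
    "tau_moment j 0 (of_real x) (of_real t)
       = of_real k1 ^ j * of_real A * X + of_real k2 ^ j * of_real B * Y + of_real k3 ^ j * of_real C * X * Y"
    "cnj (tau_moment j 0 (of_real x) (of_real t))
       = of_real k1 ^ j * of_real A / X + of_real k2 ^ j * of_real B / Y + of_real k3 ^ j * of_real C / (X * Y)"
    "tau_moment 0 1 (of_real x) (of_real t)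
       = of_real O1 * of_real A * X + of_real O2 * of_real B * Y + of_real O3 * of_real C * X * Y"
    "cnj (tau_moment 0 1 (of_real x) (of_real t))
       = of_real O1 * of_real A / X + of_real O2 * of_real B / Y + of_real O3 * of_real C / (X * Y)"
    "tau_moment 1 1 (of_real x) (of_real t)
       = of_real k1 * of_real O1 * of_real A * X + of_real k2 * of_real O2 * of_real B * Y
         + of_real k3 * of_real O3 * of_real C * X * Y"
    "cnj (tau_moment 1 1 (of_real x) (of_real t))
       = of_real k1 * of_real O1 * of_real A / X + of_real k2 * of_real O2 * of_real B / Y
         + of_real k3 * of_real O3 * of_real C / (X * Y)"
    "tau (of_real x) (of_real t) = 1 + of_real A * X + of_real B * Y + of_real C * X * Y"
    "cnj (tau (of_real x) (of_real t)) = 1 + of_real A / X + of_real B / Y + of_real C / (X * Y)"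
proof -
  have conj: "cnj X = 1 / X" "cnj Y = 1 / Y"
    by (simp_all add: X_def Y_def plane_wave_real cis_cnj divide_inverse)
  show "X \<noteq> 0" "Y \<noteq> 0" by (simp_all add: X_def Y_def plane_wave_nonzero)
  show "tau_moment j 0 (of_real x) (of_real t)
       = of_real k1 ^ j * of_real A * X + of_real k2 ^ j * of_real B * Y + of_real k3 ^ j * of_real C * X * Y"
    "cnj (tau_moment j 0 (of_real x) (of_real t))
       = of_real k1 ^ j * of_real A / X + of_real k2 ^ j * of_real B / Y + of_real k3 ^ j * of_real C / (X * Y)"
    "tau_moment 0 1 (of_real x) (of_real t)
       = of_real O1 * of_real A * X + of_real O2 * of_real B * Y + of_real O3 * of_real C * X * Y"
    "cnj (tau_moment 0 1 (of_real x) (of_real t))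
       = of_real O1 * of_real A / X + of_real O2 * of_real B / Y + of_real O3 * of_real C / (X * Y)"
    "tau_moment 1 1 (of_real x) (of_real t)
       = of_real k1 * of_real O1 * of_real A * X + of_real k2 * of_real O2 * of_real B * Y
         + of_real k3 * of_real O3 * of_real C * X * Y"
    "cnj (tau_moment 1 1 (of_real x) (of_real t))
       = of_real k1 * of_real O1 * of_real A / X + of_real k2 * of_real O2 * of_real B / Y
         + of_real k3 * of_real O3 * of_real C / (X * Y)"
    "tau (of_real x) (of_real t) = 1 + of_real A * X + of_real B * Y + of_real C * X * Y"
    "cnj (tau (of_real x) (of_real t)) = 1 + of_real A / X + of_real B / Y + of_real C / (X * Y)"
    unfolding tau_def tau_moment_split X_def[symmetric] Y_def[symmetric]
    by (simp_all add: conj mult.assoc)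
qed

text \<open>In Hirota's notation this is (i D_t + i alpha0 D_x - D_x^2 - kappa) tau . conj tau = 0.\<close>

lemma bilinear_0_tau:
  "g 0 1 x t + cnj (g 0 1 x t) - of_real \<alpha>0 * (g 1 0 x t + cnj (g 1 0 x t)) + g 2 0 x t + cnj (g 2 0 x t)
     + 2 * g 1 0 x t * cnj (g 1 0 x t) = of_real \<kappa>"
proof -
  define X where "X = plane_wave k1 O1 (of_real x) (of_real t)"
  define Y where "Y = plane_wave k2 O2 (of_real x) (of_real t)"
  note data = tau_at_real_point[where x = x and t = t, folded X_def Y_def]
  have "cnj (tau (of_real x) (of_real t)) \<noteq> 0" using tau_real_nonzero[of x t] by simp
  note bilinear = hirota_bilinear_0[OF data(1,2) _ _ _ tau_real_nonzero[of x t, unfolded data(9)]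
      this[unfolded data(10)] dispersion_relations_complex(3,1,2)]
  show ?thesis
    unfolding tau_ratio_def complex_cnj_divide data(4,6,8,10) unfolding data(3,5,7,9)
    by (rule bilinear) (simp_all add: k3_eq O3_eq \<kappa>_def dispersion_def)
qed

lemma bilinear_1_tau:
  "g 1 1 x t - g 0 1 x t * cnj (g 1 0 x t) + g 1 0 x t * cnj (g 0 1 x t) - cnj (g 1 1 x t)
     - of_real \<alpha>0 * g 2 0 x t + of_real \<alpha>0 * cnj (g 2 0 x t) + g 3 0 x t + g 2 0 x t * cnj (g 1 0 x t)
     - g 1 0 x t * cnj (g 2 0 x t) - cnj (g 3 0 x t) = of_real \<kappa> * (g 1 0 x t - cnj (g 1 0 x t))"
proof -
  define X where "X = plane_wave k1 O1 (of_real x) (of_real t)"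
  define Y where "Y = plane_wave k2 O2 (of_real x) (of_real t)"
  note data = tau_at_real_point[where x = x and t = t, folded X_def Y_def]
  have "cnj (tau (of_real x) (of_real t)) \<noteq> 0" using tau_real_nonzero[of x t] by simp
  note bilinear = hirota_bilinear_1[OF data(1,2) _ _ _ tau_real_nonzero[of x t, unfolded data(9)]
      this[unfolded data(10)] dispersion_relations_complex(1,2)]
  show ?thesis
    unfolding tau_ratio_def complex_cnj_divide data(4,6,8,10) unfolding data(3,5,7,9)
    by (rule bilinear) (simp_all add: k3_eq O3_eq \<kappa>_def dispersion_def)
qed

lemma wave_t_plus_nonlinearity: "wave_t x t + wave x t * wave_x x t = 4 * Im (G x t)"
proof -
  let ?g1 = "g 1 0 x t" and ?g2 = "g 2 0 x t" and ?g3 = "g 3 0 x t" and ?h01 = "g 0 1 x t" and ?h11 = "g 1 1 x t"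
  have re: "complex_of_real (Re z) = (z + cnj z) / 2" and im: "complex_of_real (Im z) = - \<i> / 2 * (z - cnj z)" for z
    by (simp_all add: complex_add_cnj complex_diff_cnj algebra_simps)
  have "complex_of_real (wave_t x t + wave x t * wave_x x t - 4 * Im (G x t))
      = 2*\<i>*((?h11 - ?g1*?h01) - (cnj ?h11 - cnj ?g1*cnj ?h01))
        + (of_real \<alpha>0 - 2*(?g1 + cnj ?g1)) * (-2*\<i>*((?g2 - ?g1^2) - (cnj ?g2 - (cnj ?g1)^2)))
        + 2*\<i>*((?g3 - 3*?g1*?g2 + 2*?g1^3) - (cnj ?g3 - 3*cnj ?g1*cnj ?g2 + 2*(cnj ?g1)^3))"
    unfolding wave_t_def wave_eq_tau_ratio wave_x_def G_def
    by (simp add: re im field_simps power2_eq_square power3_eq_cube)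
  also have "\<dots> = 0"
    unfolding bo_residual_from_bilinear bilinear_1_tau bilinear_0_tau by (simp add: algebra_simps)
  finally have "wave_t x t + wave x t * wave_x x t - 4 * Im (G x t) = 0"
    by (simp only: of_real_eq_0_iff)
  then show ?thesis by simp
qed

text \<open>In the variable z = e^{i(x - x0)} the tau function is a polynomial; it stays non-zero slightly
  beyond the unit circle, where |z|^{N'} and |z|^{N-N'} can be absorbed into p and r.\<close>

definition "\<rho> = root N (2 / (1 + max pp rr))"

lemma \<rho>_bounds: "1 < \<rho>" "pp * \<rho> ^ N < 1" "rr * \<rho> ^ N < 1"
proof -
  have N0: "0 < N" using N'_bounds by simp
  define \<mu> where "\<mu> = max pp rr"
  have \<mu>: "0 \<le> \<mu>" "\<mu> < 1" using pqr_bounds by (auto simp: \<mu>_def)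
  have pw: "\<rho> ^ N = 2 / (1 + \<mu>)" unfolding \<rho>_def \<mu>_def[symmetric] using N0 \<mu> by simp
  show "1 < \<rho>" unfolding \<rho>_def \<mu>_def[symmetric] using N0 \<mu> by simp
  show "pp * \<rho> ^ N < 1" "rr * \<rho> ^ N < 1"
    unfolding pw using \<mu> pqr_bounds by (simp_all add: \<mu>_def field_simps)
qed

lemma tau_nonzero_disc:
  fixes e1 e2 z :: complex
  assumes e: "cmod e1 = 1" "cmod e2 = 1" and z: "cmod z < \<rho>"
  shows "1 + of_real A * (e1 * z ^ N') + of_real B * (e2 * z ^ (N - N'))
           + of_real C * (e1 * z ^ N') * (e2 * z ^ (N - N')) \<noteq> 0"
proof -
  define c where "c = max 1 (cmod z)"
  have c1: "1 \<le> c" and c0: "c > 0" and zc: "cmod z \<le> c" by (auto simp: c_def)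
  have "c < \<rho>" using \<rho>_bounds z by (simp add: c_def)
  then have "c ^ N \<le> \<rho> ^ N" using c0 by (simp add: power_mono)
  moreover have "c ^ N' \<le> c ^ N" "c ^ (N - N') \<le> c ^ N" using c1 N'_bounds by (auto intro: power_increasing)
  ultimately have "pp * c ^ N' \<le> pp * \<rho> ^ N" "rr * c ^ (N - N') \<le> rr * \<rho> ^ N"
    using pqr_bounds by (auto intro!: mult_left_mono)
  then have p': "0 \<le> pp * c ^ N'" "pp * c ^ N' < 1" and r': "0 \<le> rr * c ^ (N - N')" "rr * c ^ (N - N') < 1"
    using \<rho>_bounds pqr_bounds c0 by auto
  define X where "X = e1 * (z / of_real c) ^ N'"
  define Y where "Y = e2 * (z / of_real c) ^ (N - N')"
  have "cmod X \<le> 1" "cmod Y \<le> 1" unfolding X_def Y_def using e zc c0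
    by (simp_all add: norm_mult norm_power norm_divide power_le_one)
  from tau_nonzero_polydisc[OF p' pqr_bounds(3,4) r' this]
  show ?thesis using c0
    by (simp add: X_def Y_def A_eq B_eq C_eq power_divide field_simps)
qed

definition "e1 t = cis (- (O1 * (t - t0)))"
definition "e2 t = cis (- (O2 * (t - t0)))"

definition tau_moment_z :: "nat \<Rightarrow> nat \<Rightarrow> real \<Rightarrow> complex \<Rightarrow> complex" where
  "tau_moment_z j l t z = of_real (k1^j * O1^l * A) * (e1 t * z ^ N') + of_real (k2^j * O2^l * B) * (e2 t * z ^ (N - N'))
     + of_real (k3^j * O3^l * C) * ((e1 t * z ^ N') * (e2 t * z ^ (N - N')))"

definition "tau_ratio_z j l t z = tau_moment_z j l t z / (1 + tau_moment_z 0 0 t z)"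

definition "G_z t z = tau_ratio_z 3 0 t z - 3 * tau_ratio_z 1 0 t z * tau_ratio_z 2 0 t z + 2 * (tau_ratio_z 1 0 t z)^3"

lemma tau_moment_eq_z: "tau_moment j l (of_real x) (of_real t) = tau_moment_z j l t (cis (x - x0))"
proof -
  have "plane_wave k1 O1 (of_real x) (of_real t) = e1 t * cis (x - x0) ^ N'"
    unfolding plane_wave_real e1_def Complex.DeMoivre cis_mult by (simp add: k1_def algebra_simps)
  moreover have "plane_wave k2 O2 (of_real x) (of_real t) = e2 t * cis (x - x0) ^ (N - N')"
    unfolding plane_wave_real e2_def Complex.DeMoivre cis_mult
    using N'_bounds by (simp add: k2_def algebra_simps of_nat_diff)
  ultimately show ?thesis unfolding tau_moment_split tau_moment_z_def by simp
qed

lemma G_eq_z: "G x t = G_z t (cis (x - x0))"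
  unfolding G_def G_z_def tau_ratio_def tau_ratio_z_def tau_def tau_moment_eq_z ..

lemma G_z_holomorphic: "G_z t holomorphic_on ball 0 \<rho>"
proof -
  have "1 + tau_moment_z 0 0 t z \<noteq> 0" if "cmod z < \<rho>" for z
    using tau_nonzero_disc[of "e1 t" "e2 t" z] that
    by (simp add: tau_moment_z_def e1_def e2_def algebra_simps)
  then show ?thesis
    unfolding G_z_def tau_ratio_z_def tau_moment_z_def
    by (intro holomorphic_intros) (auto simp: tau_moment_z_def)
qed

lemma G_z_0: "G_z t 0 = 0"
  using N'_bounds by (simp add: G_z_def tau_ratio_z_def tau_moment_z_def zero_power)

lemma hilbert_transform_wave:
  "hilbert_transform_of (\<lambda>x. wave_xx x t) (\<lambda>x. wave_t x t + wave x t * wave_x x t)"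
proof -
  have "(\<lambda>z. - \<i> * G_z t z) holomorphic_on ball 0 \<rho>"
    by (intro holomorphic_intros G_z_holomorphic)
  from hilbert_transform_of_holomorphic[OF this \<rho>_bounds(1), of x0]
  show ?thesis by (simp add: G_z_0 wave_xx_def wave_t_plus_nonlinearity G_eq_z)
qed

lemma BO_solution_wave: "BO_solution wave"
proof -
  have "deriv (\<lambda>y. wave y t) = (\<lambda>y. wave_x y t)" "deriv (\<lambda>y. wave_x y t) x = wave_xx x t"
    "deriv (\<lambda>\<tau>. wave x \<tau>) t = wave_t x t" for x t
    by (auto intro!: DERIV_imp_deriv DERIV_wave_x DERIV_wave_xx DERIV_wave_t)
  note derivs = this
  show ?thesis unfolding BO_solution_def derivs
  proof (intro conjI allI)
    fix x t
    show "(\<lambda>y. wave y t) differentiable at x" "(\<lambda>y. wave_x y t) differentiable at x"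
      "(\<lambda>\<tau>. wave x \<tau>) differentiable at t"
      using DERIV_wave_x DERIV_wave_xx DERIV_wave_t real_differentiable_def by blast+
  qed (simp add: hilbert_transform_wave)
qed

lemma wave_periodic_x: "wave (x + 2 * pi) t = wave x t"
  using root_sum_periodic[of _ "x - x0"] by (simp add: wave_def algebra_simps)

lemma wave_periodic_t: "wave x (t + 2 * pi / \<omega>) = wave x t"
proof -
  have "- (\<omega> * (t + 2 * pi / \<omega> - t0)) = - (\<omega> * (t - t0)) + (- (2 * pi))"
    using \<omega>_pos by (simp add: algebra_simps)
  then have "cis (- (\<omega> * (t + 2 * pi / \<omega> - t0))) = cis (- (\<omega> * (t - t0)))"
    by (simp add: complex_eq_iff cos_diff sin_diff)
  then show ?thesis by (simp add: wave_def)
qed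

lemma wave_is_tw_if_binomial:
  assumes n: "n > 0" and a: "0 \<le> a" "a < 1"
    and speed: "tw_speed \<alpha>0 n (- of_real a) = \<omega> * of_int \<mu> / real n"
    and P: "\<And>lam. BOpoly N N' \<nu> \<nu>' s s' lam = monom 1 j * (monom 1 n + [: of_real a * lam powi \<mu> :])"
  shows "is_N_hump_tw n \<mu> (2 * pi / \<omega>) wave"
  unfolding is_N_hump_tw_def
proof (intro exI conjI allI)
  show "cmod (- complex_of_real a) < 1" using a by simp
  show "tw_speed \<alpha>0 n (- of_real a) * (2 * pi / \<omega>) = 2 * pi * of_int \<mu> / real n"
    using \<omega>_pos unfolding speed by (simp add: field_simps)
  fix x t
  have "cis (- (\<omega> * (t - t0))) powi \<mu> = cis (- (real n * tw_speed \<alpha>0 n (- of_real a) * (t - t0)))"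
    using n unfolding speed cis_power_int by (simp add: field_simps)
  then show "wave x t = traveling_wave \<alpha>0 n (- of_real a) (x - x0) (t - t0)"
    unfolding wave_def traveling_wave_eq_root_sum_binomial[OF n, where j = j] P by simp
qed

lemma wave_is_tw_if_s'_zero:
  assumes s': "s' = 0"
  shows "is_N_hump_tw N \<nu> (2 * pi / \<omega>) wave"
proof -
  have Q0: "Q2 = 0" unfolding Q2_def using s' by simp
  then have AB: "A = 0" "B = 0" by (simp_all add: A_eq B_eq qq_def)
  have C2: "C\<^sup>2 = s / (real N + s)"
  proof -
    have "real N - real N' + s \<noteq> 0" using N'_bounds s_nonneg by simp
    then show ?thesis
      unfolding C_eq power_mult_distrib pqr_squares R2_def P2_def using s' by simp
  qed
  have C: "0 \<le> C" "C < 1"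
    using pqr_bounds mult_left_le[of pp rr] by (auto simp: C_eq mult.commute)
  have "real N * (1 - 3 * C\<^sup>2) / (1 - C\<^sup>2) = real N - 2 * s"
  proof -
    have "real N + s \<noteq> 0" using N'_bounds s_nonneg by simp
    then have "real N * (1 - 3 * C\<^sup>2) = (real N - 2 * s) * (1 - C\<^sup>2)"
      unfolding C2 by (simp add: field_simps)
    moreover have "1 - C\<^sup>2 \<noteq> 0" using C by (simp add: abs_square_eq_1)
    ultimately show ?thesis by (simp add: divide_eq_eq)
  qed
  moreover have "\<alpha>0 - (real N - 2 * s) = \<omega> * of_int \<nu> / real N"
  proof -
    have "\<alpha>0 - (real N - 2 * s) = (real N ^ 2 * of_int \<nu>' - real N' ^ 2 * of_int \<nu> - real N * of_int m) / of_int m"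
      using m_real_pos unfolding \<alpha>0_eq s' by (simp add: field_simps)
    also have "real N ^ 2 * of_int \<nu>' - real N' ^ 2 * of_int \<nu> - real N * of_int m
        = real N' * (real N - real N') * of_int \<nu>"
      unfolding m_real_eq by (simp add: algebra_simps power2_eq_square)
    also have "\<dots> / of_int m = \<omega> * of_int \<nu> / real N"
      using N'_bounds m_real_pos unfolding \<omega>_eq s' by (simp add: field_simps)
    finally show ?thesis .
  qed
  ultimately have "tw_speed \<alpha>0 N (- of_real C) = \<omega> * of_int \<nu> / real N"
    by (simp add: tw_speed_def)
  moreover have "BOpoly N N' \<nu> \<nu>' s s' lam = monom 1 0 * (monom 1 N + [: of_real C * lam powi \<nu> :])" for lam
    by (simp add: BOpoly_def AB)
  ultimately show ?thesis
    using N'_bounds C by (intro wave_is_tw_if_binomial[where j = 0]) auto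
qed

lemma wave_is_tw_if_s_zero:
  assumes s: "s = 0"
  shows "is_N_hump_tw N' \<nu>' (2 * pi / \<omega>) wave"
proof -
  have R0: "R2 = 0" unfolding R2_def using s by simp
  then have BC: "B = 0" "C = 0" by (simp_all add: B_eq C_eq rr_def)
  have A2: "A\<^sup>2 = s' / (real N' + s')"
  proof -
    have cancel: "a / b * (b * y / (c * a)) = y / c" if "a \<noteq> 0" "b \<noteq> 0" for a b c y :: real
      using that by (simp add: field_simps)
    have "real N' * (real N - real N') + (real N + s') * s' = (real N' + s') * (real N - real N' + s')"
      by (simp add: algebra_simps)
    then have "A\<^sup>2 = (real N - real N' + s') / (real N + s')
        * ((real N + s') * s' / ((real N' + s') * (real N - real N' + s')))"
      unfolding A_eq power_mult_distrib pqr_squares P2_def Q2_def using s by simp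
    also have "\<dots> = s' / (real N' + s')"
      using N'_bounds s_nonneg by (intro cancel) auto
    finally show ?thesis .
  qed
  have A: "0 \<le> A" "A < 1"
    using pqr_bounds mult_left_le[of qq pp] by (auto simp: A_eq)
  have "real N' * (1 - 3 * A\<^sup>2) / (1 - A\<^sup>2) = real N' - 2 * s'"
  proof -
    have "real N' + s' \<noteq> 0" using N'_bounds s_nonneg by simp
    then have "real N' * (1 - 3 * A\<^sup>2) = (real N' - 2 * s') * (1 - A\<^sup>2)"
      unfolding A2 by (simp add: field_simps)
    moreover have "1 - A\<^sup>2 \<noteq> 0" using A by (simp add: abs_square_eq_1)
    ultimately show ?thesis by (simp add: divide_eq_eq)
  qed
  moreover have "\<alpha>0 - (real N' - 2 * s') = \<omega> * of_int \<nu>' / real N'"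
  proof -
    have "\<alpha>0 - (real N' - 2 * s') = (real N ^ 2 * of_int \<nu>' - real N' ^ 2 * of_int \<nu>
        - 2 * real N' * of_int (\<nu>' - \<nu>) * s' - (real N' - 2 * s') * of_int m) / of_int m"
      using m_real_pos unfolding \<alpha>0_eq s by (simp add: field_simps)
    also have "real N ^ 2 * of_int \<nu>' - real N' ^ 2 * of_int \<nu>
        - 2 * real N' * of_int (\<nu>' - \<nu>) * s' - (real N' - 2 * s') * of_int m
        = of_int \<nu>' * (real N - real N') * (real N + 2 * s')"
      unfolding m_real_eq by (simp add: algebra_simps power2_eq_square)
    also have "\<dots> / of_int m = \<omega> * of_int \<nu>' / real N'"
      using N'_bounds m_real_pos unfolding \<omega>_eq by (simp add: field_simps)
    finally show ?thesis .
  qed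
  ultimately have "tw_speed \<alpha>0 N' (- of_real A) = \<omega> * of_int \<nu>' / real N'"
    by (simp add: tw_speed_def)
  moreover have "BOpoly N N' \<nu> \<nu>' s s' lam = monom 1 (N - N') * (monom 1 N' + [: of_real A * lam powi \<nu>' :])" for lam
    using N'_bounds by (simp add: BOpoly_def BC mult_monom distrib_left flip: monom_0)
  ultimately show ?thesis
    using N'_bounds A by (intro wave_is_tw_if_binomial[where j = "N - N'"]) auto
qed

lemma wave_constant:
  assumes "s = 0" "s' = 0"
  shows "wave x t = (real N ^ 2 * of_int \<nu>' - real N' ^ 2 * of_int \<nu>) / of_int m"
proof -
  have "Q2 = 0" "R2 = 0" unfolding Q2_def R2_def using assms by simp_all
  then have P: "BOpoly N N' \<nu> \<nu>' s s' lam = monom 1 0 * (monom 1 N + [:0:])" for lam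
    by (simp add: BOpoly_def A_eq B_eq C_eq qq_def rr_def)
  have "{r :: complex. r ^ N = - 0} = {0}" using N'_bounds by auto
  then have "wave x t = \<alpha>0"
    unfolding wave_def P root_sum_binomial[OF order.strict_trans[OF N'_bounds(2,1)]] by simp
  then show ?thesis unfolding \<alpha>0_eq using assms by simp
qed

end

theorem theorem1:
  fixes N N' :: nat and \<nu> \<nu>' m :: int and s s' x0 t0 \<alpha>0 \<omega> T :: real
    and u :: "real \<Rightarrow> real \<Rightarrow> real"
  assumes "N > N'" and "N' > 0" and "s \<ge> 0" and "s' \<ge> 0"
    and "m = int N * \<nu>' - int N' * \<nu>" and "m > 0"
    and "\<alpha>0 = (real N ^ 2 * of_int \<nu>' - real N' ^ 2 * of_int \<nu>) / of_int m - 2 * s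
                 - 2 * real N' * of_int (\<nu>' - \<nu>) / of_int m * s'"
    and "\<omega> = real N' * (real N - real N') * (real N + 2 * s') / of_int m"
    and "T = 2 * pi / \<omega>"
    and "u = (\<lambda>x t. \<alpha>0 + root_sum (BOpoly N N' \<nu> \<nu>' s s' (cis (- (\<omega> * (t - t0))))) (x - x0))"
  shows "(\<forall>lam. cmod lam = 1 \<longrightarrow> (\<forall>z. poly (BOpoly N N' \<nu> \<nu>' s s' lam) z = 0 \<longrightarrow> cmod z < 1))
       \<and> BO_solution u
       \<and> (\<forall>x t. u (x + 2 * pi) t = u x t)
       \<and> (\<forall>x t. u x (t + T) = u x t)
       \<and> (s' = 0 \<longrightarrow> is_N_hump_tw N \<nu> T u)
       \<and> (s = 0 \<longrightarrow> is_N_hump_tw N' \<nu>' T u)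
       \<and> (s = 0 \<and> s' = 0 \<longrightarrow>
            (\<forall>x t. u x t = (real N ^ 2 * of_int \<nu>' - real N' ^ 2 * of_int \<nu>) / of_int m))"
proof -
  interpret bo_family N N' \<nu> \<nu>' m s s' x0 t0 \<alpha>0 \<omega>
    using assms(1-8) by unfold_locales auto
  have u: "u = wave" using assms(10) by (simp add: fun_eq_iff wave_def)
  show ?thesis
    unfolding u assms(9)
  proof (intro conjI allI impI)
    show "cmod z < 1" if "cmod lam = 1" "poly (BOpoly N N' \<nu> \<nu>' s s' lam) z = 0" for lam z
      by (rule BOpoly_roots_in_disc[OF that])
    show "is_N_hump_tw N \<nu> (2 * pi / \<omega>) wave" if "s' = 0"
      by (rule wave_is_tw_if_s'_zero[OF that])
    show "is_N_hump_tw N' \<nu>' (2 * pi / \<omega>) wave" if "s = 0"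
      by (rule wave_is_tw_if_s_zero[OF that])
    show "wave x t = (real N ^ 2 * of_int \<nu>' - real N' ^ 2 * of_int \<nu>) / of_int m"
      if "s = 0 \<and> s' = 0" for x t
      by (rule wave_constant) (use that in simp_all)
  qed (simp_all add: BO_solution_wave wave_periodic_x wave_periodic_t)
qed

end
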